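(* Let $V_1=\langle\lambda_{12},\lambda_{21}\rangle$ and let $V_2^*$ be the normal closure in $VP_3$ of $V_2=\langle\lambda_{13},\lambda_{23},\lambda_{31},\lambda_{32}\rangle$. Then $V_2^*$ is a free group, freely generated by $\lambda_{13}$, $\lambda_{23}$, all elements $\lambda_{31}^v$ where $v$ ranges over the empty word and the reduced words in $\lambda_{12}^{\pm1},\lambda_{21}^{\pm1}$ beginning with a nonzero power of $\lambda_{21}$, and all elements $\lambda_{32}^u$ where $u$ ranges over the empty word and the reduced words in $\lambda_{12}^{\pm1},\lambda_{21}^{\pm1}$ beginning with a nonzero power of $\lambda_{12}$.
   Context: Notation: $a^b=b^{-1}ab$. The virtual braid group $VB_3$ has generators $\sigma_1,\sigma_2,\rho_1,\rho_2$ and defining relations $\sigma_1\sigma_2\sigma_1=\sigma_2\sigma_1\sigma_2$, $\rho_1\rho_2\rho_1=\rho_2\rho_1\rho_2$, $\rho_1^2=\rho_2^2=1$, $\rho_1\rho_2\sigma_1=\sigma_2\rho_1\rho_2$. $VP_3$ is the kernel of the homomorphism $VB_3\to S_3$ sending $\sigma_i,\rho_i$ to $(i,i+1)$. Define $\lambda_{12}=\rho_1\sigma_1^{-1}$, $\lambda_{21}=\sigma_1^{-1}\rho_1$, $\lambda_{23}=\rho_2\sigma_2^{-1}$, $\lambda_{32}=\sigma_2^{-1}\rho_2$, $\lambda_{13}=\rho_2\lambda_{12}\rho_2$, $\lambda_{31}=\rho_2\lambda_{21}\rho_2$. The group $V_1$ is free on $\lambda_{12},\lambda_{21}$. *)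

theory Defs
  imports "HOL-Algebra.Algebra"
begin

text \<open>A word over an alphabet 'g is a list of letters (g, e); e = True means the
inverse letter g^-1.\<close>

type_synonym 'g word = "('g \<times> bool) list"

fun reduced :: "'g word \<Rightarrow> bool" where
  "reduced [] = True"
| "reduced [x] = True"
| "reduced (x # y # w) = (\<not> (fst x = fst y \<and> snd x \<noteq> snd y) \<and> reduced (y # w))"

definition letter_eval :: "('a, 'b) monoid_scheme \<Rightarrow> ('g \<Rightarrow> 'a) \<Rightarrow> 'g \<times> bool \<Rightarrow> 'a" where
  "letter_eval G f x = (if snd x then inv\<^bsub>G\<^esub> (f (fst x)) else f (fst x))"

definition word_eval :: "('a, 'b) monoid_scheme \<Rightarrow> ('g \<Rightarrow> 'a) \<Rightarrow> 'g word \<Rightarrow> 'a" where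
  "word_eval G f w = foldr (\<lambda>x acc. letter_eval G f x \<otimes>\<^bsub>G\<^esub> acc) w \<one>\<^bsub>G\<^esub>"

definition free_family :: "('a, 'b) monoid_scheme \<Rightarrow> ('g \<Rightarrow> 'a) \<Rightarrow> 'g set \<Rightarrow> bool" where
  "free_family G f I \<longleftrightarrow> inj_on f I \<and> f ` I \<subseteq> carrier G \<and>
     (\<forall>w. w \<noteq> [] \<and> reduced w \<and> set (map fst w) \<subseteq> I \<longrightarrow> word_eval G f w \<noteq> \<one>\<^bsub>G\<^esub>)"

definition conjg :: "('a, 'b) monoid_scheme \<Rightarrow> 'a \<Rightarrow> 'a \<Rightarrow> 'a" where
  "conjg G a b = inv\<^bsub>G\<^esub> b \<otimes>\<^bsub>G\<^esub> a \<otimes>\<^bsub>G\<^esub> b"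

definition normal_closure :: "('a, 'b) monoid_scheme \<Rightarrow> 'a set \<Rightarrow> 'a set" where
  "normal_closure G S = \<Inter> {N. N \<lhd> G \<and> S \<subseteq> N}"

datatype vbgen = S1 | S2 | R1 | R2

abbreviation (input) pos :: "'g \<Rightarrow> 'g \<times> bool" where "pos g \<equiv> (g, False)"
abbreviation (input) ng :: "'g \<Rightarrow> 'g \<times> bool" where "ng g \<equiv> (g, True)"

fun inv_word :: "'g word \<Rightarrow> 'g word" where
  "inv_word [] = []"
| "inv_word (x # w) = inv_word w @ [(fst x, \<not> snd x)]"

text \<open>Defining relators (each relation u = v is encoded as the relator u v^-1).\<close>
definition vb3_relators :: "vbgen word set" where
  "vb3_relators = {
     [pos S1, pos S2, pos S1] @ inv_word [pos S2, pos S1, pos S2],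
     [pos R1, pos R2, pos R1] @ inv_word [pos R2, pos R1, pos R2],
     [pos R1, pos R1],
     [pos R2, pos R2],
     [pos R1, pos R2, pos S1] @ inv_word [pos S2, pos R1, pos R2]}"

inductive vb3_eq :: "vbgen word \<Rightarrow> vbgen word \<Rightarrow> bool" where
  refl: "vb3_eq w w"
| sym: "vb3_eq u w \<Longrightarrow> vb3_eq w u"
| trans: "vb3_eq u v \<Longrightarrow> vb3_eq v w \<Longrightarrow> vb3_eq u w"
| cancel: "vb3_eq (u @ [(g, e), (g, \<not> e)] @ w) (u @ w)"
| relator: "r \<in> vb3_relators \<Longrightarrow> vb3_eq (u @ r @ w) (u @ w)"

definition vb3_rel :: "(vbgen word \<times> vbgen word) set" where
  "vb3_rel = {(u, w). vb3_eq u w}"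

definition vb3_class :: "vbgen word \<Rightarrow> vbgen word set" where
  "vb3_class w = vb3_rel `` {w}"

definition VB3 :: "vbgen word set monoid" where
  "VB3 = \<lparr> carrier = UNIV // vb3_rel,
           monoid.mult = (\<lambda>A B. vb3_class ((SOME a. a \<in> A) @ (SOME b. b \<in> B))),
           monoid.one = vb3_class [] \<rparr>"

definition sigma1 where "sigma1 = vb3_class [pos S1]"
definition sigma2 where "sigma2 = vb3_class [pos S2]"
definition rho1 where "rho1 = vb3_class [pos R1]"
definition rho2 where "rho2 = vb3_class [pos R2]"

definition transp :: "nat \<Rightarrow> nat \<Rightarrow> nat" where
  "transp i = (\<lambda>x. if x = i then i + 1 else if x = i + 1 then i else x)"

fun gen_perm :: "vbgen \<Rightarrow> nat \<Rightarrow> nat" where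
  "gen_perm S1 = transp 1"
| "gen_perm S2 = transp 2"
| "gen_perm R1 = transp 1"
| "gen_perm R2 = transp 2"

definition word_perm :: "vbgen word \<Rightarrow> nat \<Rightarrow> nat" where
  "word_perm w = foldr (\<lambda>x p. gen_perm (fst x) \<circ> p) w id"

text \<open>VP_3 = kernel of VB_3 \<rightarrow> S_3 (transpositions are involutions, so inverse
letters map to the same transposition).\<close>
definition VP3 :: "vbgen word set set" where
  "VP3 = {vb3_class w | w. word_perm w = id}"

definition VP3_grp :: "vbgen word set monoid" where
  "VP3_grp = VB3\<lparr>carrier := VP3\<rparr>"

definition lam12 where "lam12 = rho1 \<otimes>\<^bsub>VB3\<^esub> inv\<^bsub>VB3\<^esub> sigma1"
definition lam21 where "lam21 = inv\<^bsub>VB3\<^esub> sigma1 \<otimes>\<^bsub>VB3\<^esub> rho1"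
definition lam23 where "lam23 = rho2 \<otimes>\<^bsub>VB3\<^esub> inv\<^bsub>VB3\<^esub> sigma2"
definition lam32 where "lam32 = inv\<^bsub>VB3\<^esub> sigma2 \<otimes>\<^bsub>VB3\<^esub> rho2"
definition lam13 where "lam13 = rho2 \<otimes>\<^bsub>VB3\<^esub> lam12 \<otimes>\<^bsub>VB3\<^esub> rho2"
definition lam31 where "lam31 = rho2 \<otimes>\<^bsub>VB3\<^esub> lam21 \<otimes>\<^bsub>VB3\<^esub> rho2"

definition V2 where "V2 = generate VP3_grp {lam13, lam23, lam31, lam32}"
definition V2star where "V2star = normal_closure VP3_grp V2"

datatype v1gen = G12 | G21

fun v1_val :: "v1gen \<Rightarrow> vbgen word set" where
  "v1_val G12 = lam12"
| "v1_val G21 = lam21"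

datatype basis_idx = L13 | L23 | L31 "v1gen word" | L32 "v1gen word"

fun basis_elt :: "basis_idx \<Rightarrow> vbgen word set" where
  "basis_elt L13 = lam13"
| "basis_elt L23 = lam23"
| "basis_elt (L31 v) = conjg VB3 lam31 (word_eval VB3 v1_val v)"
| "basis_elt (L32 u) = conjg VB3 lam32 (word_eval VB3 v1_val u)"

definition basis_set :: "basis_idx set" where
  "basis_set = {L13, L23}
     \<union> {L31 v | v. reduced v \<and> (v = [] \<or> fst (hd v) = G21)}
     \<union> {L32 u | u. reduced u \<and> (u = [] \<or> fst (hd u) = G12)}"

end

theory Submission
  imports Defs
begin

text \<open>Let H be the subgroup generated by the proposed basis B.

  Normality: the braid relations give lambda12 lambda13 lambda23 = lambda23 lambda13 lambda12,
  lambda13 lambda12 lambda32 = lambda32 lambda12 lambda13 and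
  lambda31 lambda32 lambda12 = lambda12 lambda32 lambda31, and with these, conjugating an element
  of B by lambda12, by its inverse or by rho1 stays in H (on the conjugates of lambda31 and
  lambda32 it appends a letter to the exponent word, or swaps lambda12 and lambda21). So
  Q = <rho1, sigma1> normalises H. With c1 = rho1 rho2, c2 = rho2 and c3 = 1, every generator x
  of VB3 satisfies x ck = c(pi k) n for some n in QH, where pi is the image of x in S3. Hence a
  pure virtual braid g satisfies g = g c3 = c3 n with n in QH, and normalises H. Since H is
  generated by conjugates of V2 under VP3, it is the normal closure of V2.

  Freeness: the same factorisations define an action of VB3 on F(B) x {1, 2, 3}, where (f, k)
  models the coset ck f Q: a generator permutes k by pi and acts on the free group F(B) either
  by an automorphism (conjugation by rho1 or sigma1) or by left multiplication with a basis
  letter. It respects the defining relators, and every element of B acts on (f, 3) by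
  multiplying f by its letter. So a reduced word w over B sends (1, 3) to (w, 3); if w
  evaluated to 1 in VP3, w would be empty.\<close>

section \<open>Free groups as reduced words\<close>

definition inv_letter :: "'g \<times> bool \<Rightarrow> 'g \<times> bool" where
  "inv_letter x = (fst x, \<not> snd x)"

fun cons_red :: "'g \<times> bool \<Rightarrow> 'g word \<Rightarrow> 'g word" where
  "cons_red x [] = [x]"
| "cons_red x (y # r) = (if fst y = fst x \<and> snd y \<noteq> snd x then r else x # y # r)"

definition append_red :: "'g word \<Rightarrow> 'g word \<Rightarrow> 'g word" where
  "append_red P r = foldr cons_red P r"

definition reduce :: "'g word \<Rightarrow> 'g word" where
  "reduce P = append_red P []"

lemma append_red_Nil [simp]: "append_red [] r = r"
  by (simp add: append_red_def)

lemma append_red_Cons [simp]: "append_red (x # P) r = cons_red x (append_red P r)"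
  by (simp add: append_red_def)

lemma append_red_append [simp]: "append_red (P @ Q) r = append_red P (append_red Q r)"
  by (simp add: append_red_def)

lemma inv_letter_inv_letter [simp]: "inv_letter (inv_letter x) = x"
  by (simp add: inv_letter_def)

lemma reduced_Cons:
  "reduced (x # r) \<longleftrightarrow> reduced r \<and> (r = [] \<or> \<not> (fst x = fst (hd r) \<and> snd x \<noteq> snd (hd r)))"
  by (cases r) auto

lemma reduced_ConsD: "reduced (x # r) \<Longrightarrow> reduced r"
  by (simp add: reduced_Cons)

lemma reduced_appendD: "reduced (w @ u) \<Longrightarrow> reduced w"
  by (induction w) (auto simp: reduced_Cons)

lemma reduced_snoc_iff:
  "reduced (w @ [x]) \<longleftrightarrow> reduced w \<and> (w = [] \<or> \<not> (fst (last w) = fst x \<and> snd (last w) \<noteq> snd x))"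
  by (induction w) (auto simp: reduced_Cons)

lemma reduced_cons_red [simp]: "reduced r \<Longrightarrow> reduced (cons_red x r)"
  by (cases r) (auto simp: reduced_Cons)

lemma reduced_append_red [simp]: "reduced r \<Longrightarrow> reduced (append_red P r)"
  by (induction P) auto

lemma reduced_reduce [simp]: "reduced (reduce P)"
  by (simp add: reduce_def)

lemma cons_red_reduced: "reduced (x # r) \<Longrightarrow> cons_red x r = x # r"
  by (cases r) auto

lemma cons_red_cancel [simp]:
  assumes "reduced r" and "e' = (\<not> e)"
  shows "cons_red (g, e') (cons_red (g, e) r) = r"
proof (cases r)
  case (Cons y r')
  show ?thesis
  proof (cases "fst y = g \<and> snd y \<noteq> e")
    case True
    with assms Cons have "y = (g, e')" and "reduced ((g, e') # r')"
      by (cases y; auto)+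
    with True Cons assms(2) show ?thesis
      by (simp add: cons_red_reduced)
  qed (use Cons assms in \<open>cases y, auto\<close>)
qed (use assms in simp)

lemma cons_red_inv_letter [simp]: "reduced r \<Longrightarrow> cons_red (inv_letter x) (cons_red x r) = r"
  by (cases x) (simp add: inv_letter_def)

lemma cons_red_append_red:
  assumes "reduced s" and "reduced r"
  shows "cons_red x (append_red s r) = append_red (cons_red x s) r"
proof (cases s)
  case (Cons y s')
  show ?thesis
  proof (cases "fst y = fst x \<and> snd y \<noteq> snd x")
    case True
    then have "y = inv_letter x"
      by (cases x; cases y) (auto simp: inv_letter_def)
    with Cons True assms(2) show ?thesis
      using cons_red_inv_letter[of "append_red s' r" "inv_letter x"] by simp
  qed (use Cons in auto)
qed simp

lemma reduce_Cons: "reduce (x # P) = cons_red x (reduce P)"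
  by (simp add: reduce_def)

lemma reduce_reduced: "reduced r \<Longrightarrow> reduce r = r"
proof (induction r)
  case (Cons x r)
  then show ?case
    by (simp add: reduce_Cons cons_red_reduced reduced_ConsD)
qed (simp add: reduce_def)

lemma reduce_Nil [simp]: "reduce [] = []"
  by (simp add: reduce_def)

lemma reduce_single [simp]: "reduce [x] = [x]"
  by (simp add: reduce_def)

lemma reduce_append: "reduce (P @ Q) = append_red P (reduce Q)"
  by (simp add: reduce_def)

lemma append_red_reduce: "reduced r \<Longrightarrow> append_red P r = append_red (reduce P) r"
  by (induction P) (simp_all add: reduce_Cons cons_red_append_red)

lemma reduce_reduce_append: "reduce (reduce P @ Q) = reduce (P @ Q)"
  by (metis append_red_reduce reduce_append reduced_reduce)

lemma inv_word_append [simp]: "inv_word (P @ Q) = inv_word Q @ inv_word P"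
  by (induction P) auto

lemma inv_word_inv_word [simp]: "inv_word (inv_word P) = P"
  by (induction P) auto

lemma append_red_inv_word_cancel [simp]:
  "reduced r \<Longrightarrow> append_red (inv_word W) (append_red W r) = r"
  by (induction W arbitrary: r) (auto simp: prod_eq_iff)

lemma append_red_cancel_inv_word [simp]:
  "reduced r \<Longrightarrow> append_red W (append_red (inv_word W) r) = r"
  using append_red_inv_word_cancel[of r "inv_word W"] by simp

lemma reduce_snoc:
  "reduced w \<Longrightarrow> reduce (w @ [x]) =
     (if w \<noteq> [] \<and> fst (last w) = fst x \<and> snd (last w) \<noteq> snd x then butlast w else w @ [x])"
proof (induction w)
  case (Cons y w)
  have "reduced w"
    using Cons.prems reduced_ConsD by blast
  show ?case
  proof (cases "w = []")
    case True
    then show ?thesis by (cases x; cases y) (auto simp: reduce_def)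
  next
    case False
    show ?thesis
    proof (cases "fst (last w) = fst x \<and> snd (last w) \<noteq> snd x")
      case True
      have "reduced (y # butlast w)"
        using Cons.prems False by (metis append_Cons append_butlast_last_id reduced_appendD)
      then show ?thesis
        using Cons.IH \<open>reduced w\<close> False True by (simp add: reduce_Cons cons_red_reduced)
    next
      case False': False
      have "reduced (y # w @ [x])"
        using reduced_snoc_iff[of "y # w" x] Cons.prems False False' by auto
      then show ?thesis
        using Cons.IH \<open>reduced w\<close> False False' by (auto simp: reduce_Cons cons_red_reduced)
    qed
  qed
qed (simp add: reduce_def)

lemma reduce_snoc_inv_letter: "reduced v \<Longrightarrow> reduce (reduce (v @ [x]) @ [inv_letter x]) = v"
proof -
  assume "reduced v"
  have "reduce [x, inv_letter x] = []"
    by (cases x) (simp add: reduce_def inv_letter_def)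
  then have "reduce (v @ [x, inv_letter x]) = v"
    using \<open>reduced v\<close> by (simp add: reduce_append reduce_def[symmetric] reduce_reduced)
  then show ?thesis
    by (simp add: reduce_reduce_append)
qed

lemma reduce_snoc_cancel:
  "reduced v \<Longrightarrow> e' = (\<not> e) \<Longrightarrow> reduce (reduce (v @ [(g, e)]) @ [(g, e')]) = v"
  using reduce_snoc_inv_letter[of v "(g, e)"] by (simp add: inv_letter_def)

lemma reduce_snoc_snoc_cancel: "reduced v \<Longrightarrow> e' = (\<not> e) \<Longrightarrow> reduce (v @ [(g, e), (g, e')]) = v"
  using reduce_snoc_cancel[of v e' e g] by (simp add: reduce_reduce_append)

lemma reduce_snoc_eq_Nil_iff:
  assumes "reduced w"
  shows "reduce (w @ [x]) = [] \<longleftrightarrow> w = [inv_letter x]"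
proof
  assume empty: "reduce (w @ [x]) = []"
  show "w = [inv_letter x]"
  proof (cases "w \<noteq> [] \<and> fst (last w) = fst x \<and> snd (last w) \<noteq> snd x")
    case True
    then have "butlast w = []"
      using empty reduce_snoc[OF assms, of x] by simp
    then have "w = [last w]"
      using True by (cases w rule: rev_cases) auto
    moreover have "last w = inv_letter x"
      using True by (cases "last w"; cases x) (auto simp: inv_letter_def)
    ultimately show ?thesis by simp
  next
    case False
    then show ?thesis
      using empty reduce_snoc[OF assms, of x] by (auto split: if_splits)
  qed
next
  assume "w = [inv_letter x]"
  then show "reduce (w @ [x]) = []"
    by (cases x) (simp add: reduce_def inv_letter_def)
qed

lemma hd_reduce_snoc:
  assumes "reduced w" and "w \<noteq> []" and "w \<noteq> [inv_letter x]"
  shows "reduce (w @ [x]) \<noteq> [] \<and> hd (reduce (w @ [x])) = hd w"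
proof
  show ne: "reduce (w @ [x]) \<noteq> []"
    using assms reduce_snoc_eq_Nil_iff by blast
  have "hd (butlast w) = hd w" if "butlast w \<noteq> []"
    using that by (cases w rule: rev_cases) auto
  then show "hd (reduce (w @ [x])) = hd w"
    using assms ne by (auto simp: reduce_snoc)
qed

lemma letters_cons_red: "fst ` set r \<subseteq> A \<Longrightarrow> fst x \<in> A \<Longrightarrow> fst ` set (cons_red x r) \<subseteq> A"
  by (cases r) auto

lemma letters_append_red:
  "fst ` set r \<subseteq> A \<Longrightarrow> fst ` set P \<subseteq> A \<Longrightarrow> fst ` set (append_red P r) \<subseteq> A"
  by (induction P) (simp_all add: letters_cons_red)

lemma letters_reduce: "fst ` set P \<subseteq> A \<Longrightarrow> fst ` set (reduce P) \<subseteq> A"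
  by (simp add: reduce_def letters_append_red)

lemma letters_inv_word [simp]: "fst ` set (inv_word P) = fst ` set P"
  by (induction P) auto

definition subst_letter :: "('g \<Rightarrow> 'h word) \<Rightarrow> 'g \<times> bool \<Rightarrow> 'h word" where
  "subst_letter img x = (if snd x then inv_word (img (fst x)) else img (fst x))"

definition subst_word :: "('g \<Rightarrow> 'h word) \<Rightarrow> 'g word \<Rightarrow> 'h word" where
  "subst_word img P = concat (map (subst_letter img) P)"

definition free_hom :: "('g \<Rightarrow> 'h word) \<Rightarrow> 'g word \<Rightarrow> 'h word" where
  "free_hom img f = reduce (subst_word img f)"

lemma subst_word_Nil [simp]: "subst_word img [] = []"
  by (simp add: subst_word_def)

lemma subst_word_Cons [simp]: "subst_word img (x # P) = subst_letter img x @ subst_word img P"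
  by (simp add: subst_word_def)

lemma subst_word_append [simp]: "subst_word img (P @ Q) = subst_word img P @ subst_word img Q"
  by (simp add: subst_word_def)

lemma subst_letter_pos [simp]: "subst_letter img (g, False) = img g"
  by (simp add: subst_letter_def)

lemma subst_letter_neg [simp]: "subst_letter img (g, True) = inv_word (img g)"
  by (simp add: subst_letter_def)

lemma subst_word_inv_word: "subst_word img (inv_word P) = inv_word (subst_word img P)"
  by (induction P) (auto simp: subst_letter_def)

lemma subst_word_concat: "subst_word img (concat L) = concat (map (subst_word img) L)"
  by (induction L) auto

lemma reduce_inv_word_cong:
  assumes "reduce W = reduce W'"
  shows "reduce (inv_word W) = reduce (inv_word W')"
proof -
  have "append_red W' (reduce (inv_word W')) = append_red W (reduce (inv_word W'))"
    using assms append_red_reduce[of "reduce (inv_word W')"] by (metis reduced_reduce)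
  then have "reduce (inv_word W) = append_red (inv_word W) (append_red W (reduce (inv_word W')))"
    by (simp add: reduce_def)
  then show ?thesis
    by simp
qed

lemma append_red_subst_cancel:
  "reduced r \<Longrightarrow> append_red (subst_letter img x @ subst_letter img (inv_letter x) @ Q) r = append_red Q r"
  by (cases x; cases "snd x") (auto simp: inv_letter_def)

lemma reduce_subst_word_cons_red:
  assumes "reduced r"
  shows "reduce (subst_word img (cons_red x r)) = reduce (subst_letter img x @ subst_word img r)"
proof (cases r)
  case (Cons y r')
  show ?thesis
  proof (cases "fst y = fst x \<and> snd y \<noteq> snd x")
    case True
    then have "y = inv_letter x"
      by (cases x; cases y) (auto simp: inv_letter_def)
    then show ?thesis
      using Cons True append_red_subst_cancel[of "[]" img x "subst_word img r'"]
      by (simp add: reduce_def)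
  qed (use Cons in auto)
qed simp

lemma reduce_subst_word_reduce: "reduce (subst_word img (reduce P)) = reduce (subst_word img P)"
proof (induction P)
  case (Cons x P)
  have "reduce (subst_word img (reduce (x # P)))
      = reduce (subst_letter img x @ subst_word img (reduce P))"
    by (simp add: reduce_Cons reduce_subst_word_cons_red)
  also have "\<dots> = append_red (subst_letter img x) (reduce (subst_word img P))"
    using Cons.IH by (simp add: reduce_append)
  finally show ?case
    by (simp add: reduce_append)
qed simp

lemma reduced_free_hom [simp]: "reduced (free_hom img f)"
  by (simp add: free_hom_def)

lemma free_hom_Nil [simp]: "free_hom img [] = []"
  by (simp add: free_hom_def)

lemma free_hom_cons_red [simp]:
  "reduced f \<Longrightarrow> free_hom img (cons_red x f) = append_red (subst_letter img x) (free_hom img f)"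
proof -
  assume "reduced f"
  then have "cons_red x f = reduce (x # f)"
    by (simp add: reduce_Cons reduce_reduced)
  then show ?thesis
    by (simp add: free_hom_def reduce_subst_word_reduce reduce_append)
qed

lemma free_hom_append_red [simp]:
  "reduced f \<Longrightarrow> free_hom img (append_red P f) = append_red (subst_word img P) (free_hom img f)"
  by (induction P) auto

lemma reduce_concat_map:
  "(\<And>x. x \<in> set P \<Longrightarrow> reduce (G x) = [x]) \<Longrightarrow> reduce (concat (map G P)) = reduce P"
proof (induction P)
  case (Cons x P)
  then have "reduce (concat (map G (x # P))) = append_red (G x) (reduce P)"
    by (simp add: reduce_append)
  also have "\<dots> = append_red (reduce (G x)) (reduce P)"
    by (simp add: append_red_reduce[symmetric])
  also have "\<dots> = reduce (x # P)"
    using Cons.prems by (simp add: reduce_Cons)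
  finally show ?case .
qed simp

lemma free_hom_inverse:
  assumes inverse: "\<And>i. i \<in> A \<Longrightarrow> reduce (subst_word img1 (img2 i)) = [(i, False)]"
    and "reduced f" and "fst ` set f \<subseteq> A"
  shows "free_hom img1 (free_hom img2 f) = f"
proof -
  have letter: "reduce (subst_word img1 (subst_letter img2 x)) = [x]" if "x \<in> set f" for x
  proof (cases x)
    case (Pair i e)
    with that assms(3) have "i \<in> A" by force
    show ?thesis
    proof (cases e)
      case True
      have "reduce (inv_word (subst_word img1 (img2 i))) = reduce (inv_word [(i, False)])"
        by (rule reduce_inv_word_cong) (simp add: inverse[OF \<open>i \<in> A\<close>] reduce_reduced)
      with Pair True show ?thesis
        by (simp add: subst_word_inv_word reduce_def)
    qed (use Pair inverse[OF \<open>i \<in> A\<close>] in simp)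
  qed
  have "free_hom img1 (free_hom img2 f) = reduce (subst_word img1 (subst_word img2 f))"
    by (simp add: free_hom_def reduce_subst_word_reduce)
  also have "\<dots> = reduce (concat (map (\<lambda>x. subst_word img1 (subst_letter img2 x)) f))"
    by (simp add: subst_word_def[of img2] subst_word_concat comp_def)
  also have "\<dots> = f"
    using reduce_concat_map[OF letter] \<open>reduced f\<close> by (simp add: reduce_reduced)
  finally show ?thesis .
qed

lemma letters_free_hom:
  assumes "\<And>i. i \<in> A \<Longrightarrow> fst ` set (img i) \<subseteq> B" and "fst ` set f \<subseteq> A"
  shows "fst ` set (free_hom img f) \<subseteq> B"
proof -
  have "fst ` set (subst_word img f) = (\<Union>x\<in>set f. fst ` set (img (fst x)))"
    by (induction f) (simp_all add: subst_letter_def image_Un)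
  then show ?thesis
    unfolding free_hom_def using assms by (intro letters_reduce) blast
qed

lemma (in group) inv_mult_cancel_left [simp]:
  "x \<in> carrier G \<Longrightarrow> y \<in> carrier G \<Longrightarrow> inv x \<otimes> (x \<otimes> y) = y"
  by (simp add: m_assoc[symmetric])

lemma (in group) mult_inv_cancel_left [simp]:
  "x \<in> carrier G \<Longrightarrow> y \<in> carrier G \<Longrightarrow> x \<otimes> (inv x \<otimes> y) = y"
  by (simp add: m_assoc[symmetric])

lemma (in group) inv_mult_eq_mult_inv:
  assumes "a \<in> carrier G" "b \<in> carrier G" "c \<in> carrier G" "d \<in> carrier G" and "a \<otimes> b = c \<otimes> d"
  shows "inv a \<otimes> c = b \<otimes> inv d"
proof -
  have "inv a \<otimes> c = inv a \<otimes> (c \<otimes> d) \<otimes> inv d"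
    using assms by (simp add: m_assoc)
  also have "\<dots> = b \<otimes> inv d"
    using assms by (simp add: m_assoc[symmetric] flip: assms(5))
  finally show ?thesis .
qed

lemma (in group) braid_relation_inv:
  assumes "a \<in> carrier G" "b \<in> carrier G" "a \<otimes> b \<otimes> a = b \<otimes> a \<otimes> b"
  shows "inv a \<otimes> inv b \<otimes> inv a = inv b \<otimes> inv a \<otimes> inv b"
  using arg_cong[OF assms(3), of "\<lambda>x. inv x"] assms(1,2) by (simp add: inv_mult_group m_assoc)

lemma (in group) braid_relation_conj:
  assumes "a \<in> carrier G" "b \<in> carrier G" "g \<in> carrier G" "a \<otimes> b \<otimes> a = b \<otimes> a \<otimes> b"
  shows "(g \<otimes> a \<otimes> inv g) \<otimes> (g \<otimes> b \<otimes> inv g) \<otimes> (g \<otimes> a \<otimes> inv g)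
       = (g \<otimes> b \<otimes> inv g) \<otimes> (g \<otimes> a \<otimes> inv g) \<otimes> (g \<otimes> b \<otimes> inv g)"
proof -
  have "(g \<otimes> a \<otimes> inv g) \<otimes> (g \<otimes> b \<otimes> inv g) \<otimes> (g \<otimes> a \<otimes> inv g) = g \<otimes> (a \<otimes> b \<otimes> a) \<otimes> inv g"
    using assms(1-3) by (simp add: m_assoc)
  also have "\<dots> = g \<otimes> (b \<otimes> a \<otimes> b) \<otimes> inv g"
    using assms(4) by simp
  finally show ?thesis
    using assms(1-3) by (simp add: m_assoc)
qed

lemma word_eval_Nil [simp]: "word_eval G f [] = \<one>\<^bsub>G\<^esub>"
  by (simp add: word_eval_def)

lemma word_eval_Cons: "word_eval G f (x # w) = letter_eval G f x \<otimes>\<^bsub>G\<^esub> word_eval G f w"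
  by (simp add: word_eval_def)

lemma word_eval_map_apfst: "word_eval G (f \<circ> h) w = word_eval G f (map (apfst h) w)"
  by (induction w) (simp_all add: word_eval_Cons letter_eval_def)

lemma (in group) letter_eval_closed [simp]: "range f \<subseteq> carrier G \<Longrightarrow> letter_eval G f x \<in> carrier G"
  by (auto simp: letter_eval_def)

lemma (in group) word_eval_closed [simp]: "range f \<subseteq> carrier G \<Longrightarrow> word_eval G f w \<in> carrier G"
  by (induction w) (simp_all add: word_eval_Cons)

lemma (in group) word_eval_append:
  "range f \<subseteq> carrier G \<Longrightarrow> word_eval G f (u @ w) = word_eval G f u \<otimes> word_eval G f w"
  by (induction u) (simp_all add: word_eval_Cons m_assoc)

lemma (in group) word_eval_cons_red:
  assumes "range f \<subseteq> carrier G"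
  shows "word_eval G f (cons_red x r) = word_eval G f (x # r)"
proof (cases r)
  case (Cons y r')
  show ?thesis
  proof (cases "fst y = fst x \<and> snd y \<noteq> snd x")
    case True
    moreover have "f (fst x) \<in> carrier G"
      using assms by blast
    ultimately have "letter_eval G f y = inv (letter_eval G f x)"
      by (cases x; cases y) (auto simp: letter_eval_def)
    with Cons True assms show ?thesis
      by (simp add: word_eval_Cons)
  qed (use Cons in auto)
qed simp

lemma (in group) word_eval_reduce:
  "range f \<subseteq> carrier G \<Longrightarrow> word_eval G f (reduce w) = word_eval G f w"
  by (induction w) (simp_all add: reduce_Cons word_eval_cons_red word_eval_Cons)

lemma (in group) word_eval_conj:
  assumes "range f \<subseteq> carrier G" and "g \<in> carrier G"
  shows "g \<otimes> word_eval G f w \<otimes> inv g = word_eval G (\<lambda>i. g \<otimes> f i \<otimes> inv g) w"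
proof (induction w)
  case (Cons x w)
  have "f (fst x) \<in> carrier G"
    using assms(1) by blast
  then have "g \<otimes> letter_eval G f x \<otimes> inv g = letter_eval G (\<lambda>i. g \<otimes> f i \<otimes> inv g) x"
    using assms(2) by (auto simp: letter_eval_def inv_mult_group m_assoc)
  moreover have "g \<otimes> word_eval G f (x # w) \<otimes> inv g
      = (g \<otimes> letter_eval G f x \<otimes> inv g) \<otimes> (g \<otimes> word_eval G f w \<otimes> inv g)"
    using assms by (simp add: word_eval_Cons m_assoc)
  ultimately show ?case
    using Cons by (simp add: word_eval_Cons)
qed (use assms in simp)

lemma (in group) word_eval_in_subgroup:
  assumes "subgroup H G" and "range f \<subseteq> H"
  shows "word_eval G f w \<in> H"
proof (induction w)
  case (Cons x w)
  have "letter_eval G f x \<in> H"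
    using assms subgroup.m_inv_closed[OF assms(1)] by (auto simp: letter_eval_def)
  with Cons show ?case
    by (simp add: word_eval_Cons subgroup.m_closed[OF assms(1)])
qed (simp add: subgroup.one_closed[OF assms(1)])

lemma (in group) word_eval_subgroup_consistent:
  assumes "subgroup H G" and "range f \<subseteq> H"
  shows "word_eval (G\<lparr>carrier := H\<rparr>) f w = word_eval G f w"
proof (induction w)
  case (Cons x w)
  have "f (fst x) \<in> H"
    using assms(2) by blast
  then have "letter_eval (G\<lparr>carrier := H\<rparr>) f x = letter_eval G f x"
    using m_inv_consistent[OF assms(1)] by (simp add: letter_eval_def)
  with Cons show ?case
    by (simp add: word_eval_Cons)
qed simp

lemma (in group) conjg_one [simp]: "a \<in> carrier G \<Longrightarrow> conjg G a \<one> = a"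
  by (simp add: conjg_def)

lemma (in group) conjg_conjg:
  "a \<in> carrier G \<Longrightarrow> b \<in> carrier G \<Longrightarrow> c \<in> carrier G \<Longrightarrow> conjg G (conjg G a b) c = conjg G a (b \<otimes> c)"
  by (simp add: conjg_def inv_mult_group m_assoc)

lemma (in group) conj_conjg:
  "a \<in> carrier G \<Longrightarrow> b \<in> carrier G \<Longrightarrow> g \<in> carrier G \<Longrightarrow>
    g \<otimes> conjg G a b \<otimes> inv g = conjg G (g \<otimes> a \<otimes> inv g) (g \<otimes> b \<otimes> inv g)"
  by (simp add: conjg_def inv_mult_group m_assoc)

text \<open>For a subgroup H this is the normalizer of H, stated elementwise rather than with cosets
  as in HOL-Algebra.\<close>

definition normalizing :: "('a, 'b) monoid_scheme \<Rightarrow> 'a set \<Rightarrow> 'a set" where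
  "normalizing G H = {g \<in> carrier G. \<forall>h\<in>H. g \<otimes>\<^bsub>G\<^esub> h \<otimes>\<^bsub>G\<^esub> inv\<^bsub>G\<^esub> g \<in> H \<and> inv\<^bsub>G\<^esub> g \<otimes>\<^bsub>G\<^esub> h \<otimes>\<^bsub>G\<^esub> g \<in> H}"

lemma (in group) normalizing_subgroup:
  assumes "H \<subseteq> carrier G"
  shows "subgroup (normalizing G H) G"
proof (rule subgroupI)
  fix a b
  assume a: "a \<in> normalizing G H" and b: "b \<in> normalizing G H"
  then have c: "a \<in> carrier G" "b \<in> carrier G"
    by (auto simp: normalizing_def)
  have "a \<otimes> b \<otimes> h \<otimes> inv (a \<otimes> b) = a \<otimes> (b \<otimes> h \<otimes> inv b) \<otimes> inv a"
    and "inv (a \<otimes> b) \<otimes> h \<otimes> (a \<otimes> b) = inv b \<otimes> (inv a \<otimes> h \<otimes> a) \<otimes> b"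
    if "h \<in> H" for h
    using c that assms by (auto simp: m_assoc inv_mult_group)
  with a b c show "a \<otimes> b \<in> normalizing G H"
    by (auto simp: normalizing_def)
next
  have "\<one> \<in> normalizing G H"
    using assms by (auto simp: normalizing_def)
  then show "normalizing G H \<noteq> {}"
    by blast
qed (auto simp: normalizing_def)

lemma (in group) subgroup_subset_normalizing: "subgroup H G \<Longrightarrow> H \<subseteq> normalizing G H"
  by (auto simp: normalizing_def subgroup.m_closed subgroup.m_inv_closed subgroup.mem_carrier)

lemma (in group) conj_generate_closed:
  assumes S: "S \<subseteq> carrier G" and g: "g \<in> carrier G"
    and gen: "\<And>x. x \<in> S \<Longrightarrow> g \<otimes> x \<otimes> inv g \<in> generate G S"
    and h: "h \<in> generate G S"
  shows "g \<otimes> h \<otimes> inv g \<in> generate G S"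
  using h
proof (induction rule: generate.induct)
  case one
  then show ?case
    using g by (simp add: generate.one)
next
  case (incl h)
  then show ?case
    by (rule gen)
next
  case (inv h)
  have "g \<otimes> inv h \<otimes> inv g = inv (g \<otimes> h \<otimes> inv g)"
    using g inv S by (auto simp: inv_mult_group m_assoc)
  then show ?case
    using gen[OF inv] by (simp add: generate.inv generate_m_inv_closed[OF S])
next
  case (eng h1 h2)
  have "h1 \<in> carrier G" "h2 \<in> carrier G"
    using eng.hyps generate_in_carrier[OF S] by auto
  then have "g \<otimes> (h1 \<otimes> h2) \<otimes> inv g = (g \<otimes> h1 \<otimes> inv g) \<otimes> (g \<otimes> h2 \<otimes> inv g)"
    using g by (simp add: m_assoc)
  then show ?case
    using eng.IH by (simp add: generate.eng)
qed

lemma (in group) in_normalizing_generate: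
  assumes "S \<subseteq> carrier G" and "g \<in> carrier G"
    and "\<And>x. x \<in> S \<Longrightarrow> g \<otimes> x \<otimes> inv g \<in> generate G S"
    and "\<And>x. x \<in> S \<Longrightarrow> inv g \<otimes> x \<otimes> g \<in> generate G S"
  shows "g \<in> normalizing G (generate G S)"
  using assms conj_generate_closed[of S g] conj_generate_closed[of S "inv g"]
  by (auto simp: normalizing_def)

lemma (in group) normal_in_subgroup_if_normalizing:
  assumes K: "subgroup K G" and H: "subgroup H G" "H \<subseteq> K" and norm: "K \<subseteq> normalizing G H"
  shows "H \<lhd> G\<lparr>carrier := K\<rparr>"
proof -
  interpret K: group "G\<lparr>carrier := K\<rparr>"
    by (rule subgroup.subgroup_is_group[OF K is_group])
  show ?thesis
    unfolding K.normal_inv_iff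
  proof (intro conjI ballI)
    show "subgroup H (G\<lparr>carrier := K\<rparr>)"
      by (rule subgroup_incl[OF H(1) K H(2)])
    fix x h
    assume "x \<in> carrier (G\<lparr>carrier := K\<rparr>)" and "h \<in> H"
    then show "x \<otimes>\<^bsub>G\<lparr>carrier := K\<rparr>\<^esub> h \<otimes>\<^bsub>G\<lparr>carrier := K\<rparr>\<^esub> inv\<^bsub>G\<lparr>carrier := K\<rparr>\<^esub> x \<in> H"
      using norm m_inv_consistent[OF K] by (auto simp: normalizing_def)
  qed
qed

lemma normal_closure_eqI:
  assumes "H \<lhd> G" and "S \<subseteq> H" and "\<And>N. N \<lhd> G \<Longrightarrow> S \<subseteq> N \<Longrightarrow> H \<subseteq> N"
  shows "normal_closure G S = H"
  using assms unfolding normal_closure_def by blast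

lemma vb3_eq_context: "vb3_eq u w \<Longrightarrow> vb3_eq (p @ u @ q) (p @ w @ q)"
proof (induction rule: vb3_eq.induct)
  case (cancel u g e w)
  show ?case
    using vb3_eq.cancel[of "p @ u" g e "w @ q"] by simp
next
  case (relator r u w)
  show ?case
    using vb3_eq.relator[OF relator, of "p @ u" "w @ q"] by simp
qed (auto intro: vb3_eq.intros)

lemma vb3_eq_append: "vb3_eq u u' \<Longrightarrow> vb3_eq w w' \<Longrightarrow> vb3_eq (u @ w) (u' @ w')"
  by (metis vb3_eq.trans vb3_eq_context append_Nil append_Nil2)

lemma vb3_eq_inv_word_cancel: "vb3_eq (inv_word w @ w) []"
proof (induction w)
  case (Cons x w)
  have "vb3_eq (inv_word w @ [(fst x, \<not> snd x), (fst x, \<not> \<not> snd x)] @ w) (inv_word w @ w)"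
    by (rule vb3_eq.cancel)
  then show ?case
    using Cons vb3_eq.trans by fastforce
qed (simp add: vb3_eq.refl)

lemma vb3_eq_relator: "p @ inv_word q \<in> vb3_relators \<Longrightarrow> vb3_eq p q"
  using vb3_eq.relator[of "p @ inv_word q" "[]" q] vb3_eq_context[OF vb3_eq_inv_word_cancel, of p q "[]"]
  by (auto intro: vb3_eq.sym vb3_eq.trans)

lemma vb3_class_eq_iff: "vb3_class u = vb3_class w \<longleftrightarrow> vb3_eq u w"
proof
  assume "vb3_class u = vb3_class w"
  then have "w \<in> vb3_class u"
    by (auto simp: vb3_class_def vb3_rel_def intro: vb3_eq.refl)
  then show "vb3_eq u w"
    by (simp add: vb3_class_def vb3_rel_def)
qed (auto simp: vb3_class_def vb3_rel_def intro: vb3_eq.trans vb3_eq.sym)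

lemma carrier_VB3: "carrier VB3 = range vb3_class"
  by (auto simp: VB3_def quotient_def vb3_class_def)

lemma vb3_class_in_carrier [simp]: "vb3_class w \<in> carrier VB3"
  by (simp add: carrier_VB3)

lemma vb3_eq_some_in_class: "vb3_eq w (SOME a. a \<in> vb3_class w)"
proof -
  have "w \<in> vb3_class w"
    by (simp add: vb3_class_def vb3_rel_def vb3_eq.refl)
  then have "(SOME a. a \<in> vb3_class w) \<in> vb3_class w"
    by (rule someI)
  then show ?thesis
    by (simp add: vb3_class_def vb3_rel_def)
qed

lemma vb3_class_mult [simp]: "vb3_class a \<otimes>\<^bsub>VB3\<^esub> vb3_class b = vb3_class (a @ b)"
  using vb3_eq_append[OF vb3_eq_some_in_class vb3_eq_some_in_class, of a b]
  by (simp add: VB3_def vb3_class_eq_iff vb3_eq.sym)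

lemma one_VB3: "\<one>\<^bsub>VB3\<^esub> = vb3_class []"
  by (simp add: VB3_def)

lemma group_VB3: "group VB3"
proof (rule groupI)
  fix x
  assume "x \<in> carrier VB3"
  then obtain w where "x = vb3_class w"
    by (auto simp: carrier_VB3)
  then show "\<exists>y\<in>carrier VB3. y \<otimes>\<^bsub>VB3\<^esub> x = \<one>\<^bsub>VB3\<^esub>"
    by (intro bexI[of _ "vb3_class (inv_word w)"])
      (simp_all add: one_VB3 vb3_class_eq_iff vb3_eq_inv_word_cancel)
qed (auto simp: carrier_VB3 one_VB3)

interpretation VB: group VB3
  by (rule group_VB3)

lemma vb3_class_inv [simp]: "inv\<^bsub>VB3\<^esub> (vb3_class w) = vb3_class (inv_word w)"
  using VB.inv_equality[of "vb3_class (inv_word w)" "vb3_class w"]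
  by (simp add: one_VB3 vb3_class_eq_iff vb3_eq_inv_word_cancel)

abbreviation vb_mult (infixl "\<bullet>" 70) where "x \<bullet> y \<equiv> x \<otimes>\<^bsub>VB3\<^esub> y"
abbreviation vb_inv where "vb_inv x \<equiv> inv\<^bsub>VB3\<^esub> x"
abbreviation vb_one where "vb_one \<equiv> \<one>\<^bsub>VB3\<^esub>"

locale vb3_action =
  fixes act :: "vbgen \<times> bool \<Rightarrow> 's \<Rightarrow> 's" and P :: "'s \<Rightarrow> bool"
  assumes act_closed: "P s \<Longrightarrow> P (act x s)"
    and act_cancel: "P s \<Longrightarrow> act (g, e) (act (g, \<not> e) s) = s"
    and act_relator: "r \<in> vb3_relators \<Longrightarrow> P s \<Longrightarrow> foldr act r s = s"
begin

lemma foldr_act_closed: "P s \<Longrightarrow> P (foldr act w s)"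
  by (induction w) (simp_all add: act_closed)

lemma foldr_act_vb3_eq: "vb3_eq u w \<Longrightarrow> P s \<Longrightarrow> foldr act u s = foldr act w s"
proof (induction u w arbitrary: s rule: vb3_eq.induct)
  case (cancel u g e w)
  then show ?case
    using act_cancel[OF foldr_act_closed] by simp
next
  case (relator r u w)
  then show ?case
    using act_relator[OF relator.hyps foldr_act_closed] by simp
qed auto

definition class_act :: "vbgen word set \<Rightarrow> 's \<Rightarrow> 's" where
  "class_act A s = foldr act (SOME a. a \<in> A) s"

lemma class_act_vb3_class: "P s \<Longrightarrow> class_act (vb3_class w) s = foldr act w s"
  unfolding class_act_def using foldr_act_vb3_eq[OF vb3_eq_some_in_class] by metis

lemma class_act_closed: "A \<in> carrier VB3 \<Longrightarrow> P s \<Longrightarrow> P (class_act A s)"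
  by (auto simp: carrier_VB3 class_act_vb3_class foldr_act_closed)

lemma class_act_mult:
  "A \<in> carrier VB3 \<Longrightarrow> B \<in> carrier VB3 \<Longrightarrow> P s \<Longrightarrow> class_act (A \<bullet> B) s = class_act A (class_act B s)"
  by (auto simp: carrier_VB3 class_act_vb3_class foldr_act_closed)

lemma class_act_one: "P s \<Longrightarrow> class_act vb_one s = s"
  by (simp add: one_VB3 class_act_vb3_class)

lemma class_act_inv: "A \<in> carrier VB3 \<Longrightarrow> P s \<Longrightarrow> class_act (vb_inv A) (class_act A s) = s"
  by (metis VB.inv_closed VB.l_inv class_act_mult class_act_one)

end

lemma word_perm_Nil [simp]: "word_perm [] = id"
  by (simp add: word_perm_def)

lemma word_perm_Cons: "word_perm (x # w) = gen_perm (fst x) \<circ> word_perm w"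
  by (simp add: word_perm_def)

lemma word_perm_append: "word_perm (u @ w) = word_perm u \<circ> word_perm w"
  by (induction u) (auto simp: word_perm_def)

lemma gen_perm_gen_perm [simp]: "gen_perm g (gen_perm g k) = k"
  by (cases g) (auto simp: transp_def)

lemma gen_perm_range: "k \<in> {1, 2, 3} \<Longrightarrow> gen_perm g k \<in> {1, 2, 3}"
  by (cases g) (auto simp: transp_def)

lemma word_perm_range: "k \<in> {1, 2, 3} \<Longrightarrow> word_perm w k \<in> {1, 2, 3}"
proof (induction w)
  case (Cons x w)
  then show ?case
    using gen_perm_range[of "word_perm w k" "fst x"] by (simp add: word_perm_Cons)
qed simp

lemma word_perm_vb3_eq: "vb3_eq u w \<Longrightarrow> word_perm u = word_perm w"
proof -
  interpret perm: vb3_action "\<lambda>x p. gen_perm (fst x) \<circ> p" "\<lambda>_. True"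
    by unfold_locales (auto simp: vb3_relators_def transp_def fun_eq_iff)
  show "vb3_eq u w \<Longrightarrow> word_perm u = word_perm w"
    unfolding word_perm_def using perm.foldr_act_vb3_eq by blast
qed

lemma vb3_class_in_VP3_iff: "vb3_class w \<in> VP3 \<longleftrightarrow> word_perm w = id"
  by (auto simp: VP3_def vb3_class_eq_iff dest: word_perm_vb3_eq intro: vb3_eq.refl)

lemma VP3_subgroup: "subgroup VP3 VB3"
proof (rule VB.subgroupI)
  show "VP3 \<subseteq> carrier VB3" and "VP3 \<noteq> {}"
    using vb3_class_in_VP3_iff[of "[]"] by (auto simp: VP3_def)
next
  fix a
  assume "a \<in> VP3"
  then obtain w where w: "a = vb3_class w" "word_perm w = id"
    by (auto simp: VP3_def)
  have "word_perm (inv_word w) \<circ> word_perm w = id"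
    using word_perm_vb3_eq[OF vb3_eq_inv_word_cancel[of w]] by (simp add: word_perm_append)
  then show "vb_inv a \<in> VP3"
    using w by (simp add: vb3_class_in_VP3_iff)
next
  fix a b
  assume "a \<in> VP3" "b \<in> VP3"
  then show "a \<bullet> b \<in> VP3"
    by (auto simp: VP3_def vb3_class_in_VP3_iff word_perm_append)
qed

interpretation VP: subgroup VP3 VB3
  by (rule VP3_subgroup)

lemma group_VP3_grp: "group VP3_grp"
  unfolding VP3_grp_def by (rule VP.subgroup_is_group[OF group_VB3])

lemma VP3_grp_simps [simp]:
  "carrier VP3_grp = VP3"
  "x \<otimes>\<^bsub>VP3_grp\<^esub> y = x \<bullet> y"
  "\<one>\<^bsub>VP3_grp\<^esub> = vb_one"
  by (simp_all add: VP3_grp_def)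

lemma inv_VP3_grp [simp]: "x \<in> VP3 \<Longrightarrow> inv\<^bsub>VP3_grp\<^esub> x = vb_inv x"
  unfolding VP3_grp_def by (rule VB.m_inv_consistent[OF VP3_subgroup])

section \<open>Relations among the lambda_ij\<close>

lemma vb3_gens_in_carrier [simp]:
  "sigma1 \<in> carrier VB3" "sigma2 \<in> carrier VB3" "rho1 \<in> carrier VB3" "rho2 \<in> carrier VB3"
  by (simp_all add: sigma1_def sigma2_def rho1_def rho2_def)

lemma rho1_rho1 [simp]: "rho1 \<bullet> rho1 = vb_one"
  using vb3_eq.relator[of "[(R1, False), (R1, False)]" "[]" "[]"]
  by (simp add: rho1_def one_VB3 vb3_class_eq_iff vb3_relators_def)

lemma rho2_rho2 [simp]: "rho2 \<bullet> rho2 = vb_one"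
  using vb3_eq.relator[of "[(R2, False), (R2, False)]" "[]" "[]"]
  by (simp add: rho2_def one_VB3 vb3_class_eq_iff vb3_relators_def)

text \<open>The simp rules about rho1 and rho2 are stated right-nested, the normal form of VB.m_assoc.\<close>

lemma rho_braid [simp]: "rho1 \<bullet> (rho2 \<bullet> rho1) = rho2 \<bullet> (rho1 \<bullet> rho2)"
  using vb3_eq_relator[of "[(R1, False), (R2, False), (R1, False)]" "[(R2, False), (R1, False), (R2, False)]"]
  by (simp add: rho1_def rho2_def vb3_class_eq_iff vb3_relators_def VB.m_assoc)

lemma sigma_braid: "sigma1 \<bullet> sigma2 \<bullet> sigma1 = sigma2 \<bullet> sigma1 \<bullet> sigma2"
  using vb3_eq_relator[of "[(S1, False), (S2, False), (S1, False)]" "[(S2, False), (S1, False), (S2, False)]"]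
  by (simp add: sigma1_def sigma2_def vb3_class_eq_iff vb3_relators_def)

lemma rho1_rho2_sigma1: "rho1 \<bullet> rho2 \<bullet> sigma1 = sigma2 \<bullet> rho1 \<bullet> rho2"
  using vb3_eq_relator[of "[(R1, False), (R2, False), (S1, False)]" "[(S2, False), (R1, False), (R2, False)]"]
  by (simp add: sigma1_def sigma2_def rho1_def rho2_def vb3_class_eq_iff vb3_relators_def)

lemma inv_rho1 [simp]: "vb_inv rho1 = rho1"
  using VB.inv_equality by auto

lemma inv_rho2 [simp]: "vb_inv rho2 = rho2"
  using VB.inv_equality by auto

lemma rho1_rho1_left [simp]: "x \<in> carrier VB3 \<Longrightarrow> rho1 \<bullet> (rho1 \<bullet> x) = x"
  by (simp add: VB.m_assoc[symmetric])

lemma rho2_rho2_left [simp]: "x \<in> carrier VB3 \<Longrightarrow> rho2 \<bullet> (rho2 \<bullet> x) = x"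
  by (simp add: VB.m_assoc[symmetric])

lemma rho_braid_left [simp]:
  "x \<in> carrier VB3 \<Longrightarrow> rho1 \<bullet> (rho2 \<bullet> (rho1 \<bullet> x)) = rho2 \<bullet> (rho1 \<bullet> (rho2 \<bullet> x))"
  using rho_braid by (simp add: VB.m_assoc[symmetric])

lemmas VB_simps = VB.m_assoc VB.inv_mult_group VB.m_closed VB.inv_closed

lemma sigma2_eq: "sigma2 = rho1 \<bullet> rho2 \<bullet> sigma1 \<bullet> rho2 \<bullet> rho1"
proof -
  have "rho1 \<bullet> rho2 \<bullet> sigma1 \<bullet> rho2 \<bullet> rho1 = sigma2 \<bullet> rho1 \<bullet> rho2 \<bullet> rho2 \<bullet> rho1"
    by (simp only: rho1_rho2_sigma1)
  also have "\<dots> = sigma2"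
    by (simp add: VB.m_assoc)
  finally show ?thesis
    by (rule HOL.sym)
qed

lemma lam_eq_rho_sigma1:
  "lam12 = rho1 \<bullet> vb_inv sigma1"
  "lam21 = vb_inv sigma1 \<bullet> rho1"
  "lam23 = rho2 \<bullet> rho1 \<bullet> rho2 \<bullet> vb_inv sigma1 \<bullet> rho2 \<bullet> rho1"
  "lam32 = rho1 \<bullet> rho2 \<bullet> vb_inv sigma1 \<bullet> rho2 \<bullet> rho1 \<bullet> rho2"
  "lam13 = rho2 \<bullet> rho1 \<bullet> vb_inv sigma1 \<bullet> rho2"
  "lam31 = rho2 \<bullet> vb_inv sigma1 \<bullet> rho1 \<bullet> rho2"
  by (simp_all add: lam12_def lam21_def lam23_def lam32_def lam13_def lam31_def sigma2_eq VB_simps)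

lemma rho1_lam13_rho1: "rho1 \<bullet> lam13 \<bullet> rho1 = lam23"
  by (simp add: lam_eq_rho_sigma1 VB_simps)

lemma rho1_lam31_rho1: "rho1 \<bullet> lam31 \<bullet> rho1 = lam32"
  by (simp add: lam_eq_rho_sigma1 VB_simps)

lemma rho1_lam23_rho1: "rho1 \<bullet> lam23 \<bullet> rho1 = lam13"
  by (simp add: lam_eq_rho_sigma1 VB_simps)

lemma rho1_lam32_rho1: "rho1 \<bullet> lam32 \<bullet> rho1 = lam31"
  by (simp add: lam_eq_rho_sigma1 VB_simps)

abbreviation sigma13 :: "vbgen word set" where
  "sigma13 \<equiv> rho2 \<bullet> rho1 \<bullet> sigma1 \<bullet> rho1 \<bullet> rho2"

lemma sigma13_sigma1_braid: "sigma13 \<bullet> sigma1 \<bullet> sigma13 = sigma1 \<bullet> sigma13 \<bullet> sigma1"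
proof -
  have "sigma13 \<bullet> sigma1 \<bullet> sigma13 = rho2 \<bullet> rho1 \<bullet> (sigma1 \<bullet> sigma2 \<bullet> sigma1) \<bullet> rho1 \<bullet> rho2"
    by (simp add: sigma2_eq VB.m_assoc)
  also have "\<dots> = rho2 \<bullet> rho1 \<bullet> (sigma2 \<bullet> sigma1 \<bullet> sigma2) \<bullet> rho1 \<bullet> rho2"
    by (simp only: sigma_braid)
  also have "\<dots> = sigma1 \<bullet> sigma13 \<bullet> sigma1"
    by (simp add: sigma2_eq VB.m_assoc)
  finally show ?thesis .
qed

lemma sigma13_sigma2_braid:
  "(rho1 \<bullet> rho2 \<bullet> sigma1 \<bullet> rho2 \<bullet> rho1) \<bullet> sigma13 \<bullet> (rho1 \<bullet> rho2 \<bullet> sigma1 \<bullet> rho2 \<bullet> rho1)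
   = sigma13 \<bullet> (rho1 \<bullet> rho2 \<bullet> sigma1 \<bullet> rho2 \<bullet> rho1) \<bullet> sigma13"
proof -
  have "(rho1 \<bullet> rho2 \<bullet> sigma1 \<bullet> rho2 \<bullet> rho1) \<bullet> sigma13 \<bullet> (rho1 \<bullet> rho2 \<bullet> sigma1 \<bullet> rho2 \<bullet> rho1)
      = rho1 \<bullet> rho2 \<bullet> (sigma1 \<bullet> sigma2 \<bullet> sigma1) \<bullet> rho2 \<bullet> rho1"
    by (simp add: sigma2_eq VB.m_assoc)
  also have "\<dots> = rho1 \<bullet> rho2 \<bullet> (sigma2 \<bullet> sigma1 \<bullet> sigma2) \<bullet> rho2 \<bullet> rho1"
    by (simp only: sigma_braid)
  also have "\<dots> = sigma13 \<bullet> (rho1 \<bullet> rho2 \<bullet> sigma1 \<bullet> rho2 \<bullet> rho1) \<bullet> sigma13"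
    by (simp add: sigma2_eq VB.m_assoc)
  finally show ?thesis .
qed

lemma inv_sigma13_sigma1_braid:
  "vb_inv sigma1 \<bullet> vb_inv sigma13 \<bullet> vb_inv sigma1 = vb_inv sigma13 \<bullet> vb_inv sigma1 \<bullet> vb_inv sigma13"
  by (rule VB.braid_relation_inv[OF _ _ sigma13_sigma1_braid[symmetric]]) simp_all

lemma inv_sigma13_sigma2_braid:
  "vb_inv (rho1 \<bullet> rho2 \<bullet> sigma1 \<bullet> rho2 \<bullet> rho1) \<bullet> vb_inv sigma13 \<bullet> vb_inv (rho1 \<bullet> rho2 \<bullet> sigma1 \<bullet> rho2 \<bullet> rho1) = vb_inv sigma13 \<bullet> vb_inv (rho1 \<bullet> rho2 \<bullet> sigma1 \<bullet> rho2 \<bullet> rho1) \<bullet> vb_inv sigma13"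
  by (rule VB.braid_relation_inv[OF _ _ sigma13_sigma2_braid]) simp_all

lemma lam12_lam13_lam23: "lam12 \<bullet> lam13 \<bullet> lam23 = lam23 \<bullet> lam13 \<bullet> lam12"
proof -
  have braid: "(rho1 \<bullet> vb_inv sigma1 \<bullet> vb_inv rho1) \<bullet> (rho1 \<bullet> vb_inv sigma13 \<bullet> vb_inv rho1) \<bullet> (rho1 \<bullet> vb_inv sigma1 \<bullet> vb_inv rho1)
      = (rho1 \<bullet> vb_inv sigma13 \<bullet> vb_inv rho1) \<bullet> (rho1 \<bullet> vb_inv sigma1 \<bullet> vb_inv rho1) \<bullet> (rho1 \<bullet> vb_inv sigma13 \<bullet> vb_inv rho1)"
    by (rule VB.braid_relation_conj[OF _ _ _ inv_sigma13_sigma1_braid]) simp_all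
  have "lam12 \<bullet> lam13 \<bullet> lam23
      = ((rho1 \<bullet> vb_inv sigma1 \<bullet> vb_inv rho1) \<bullet> (rho1 \<bullet> vb_inv sigma13 \<bullet> vb_inv rho1) \<bullet> (rho1 \<bullet> vb_inv sigma1 \<bullet> vb_inv rho1))
        \<bullet> (rho1 \<bullet> rho2 \<bullet> rho1)"
    by (simp add: lam_eq_rho_sigma1 VB_simps)
  also have "\<dots> = ((rho1 \<bullet> vb_inv sigma13 \<bullet> vb_inv rho1) \<bullet> (rho1 \<bullet> vb_inv sigma1 \<bullet> vb_inv rho1) \<bullet> (rho1 \<bullet> vb_inv sigma13 \<bullet> vb_inv rho1))
        \<bullet> (rho1 \<bullet> rho2 \<bullet> rho1)"
    by (simp only: braid)
  also have "\<dots> = lam23 \<bullet> lam13 \<bullet> lam12"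
    by (simp add: lam_eq_rho_sigma1 VB_simps)
  finally show ?thesis .
qed

lemma lam13_lam12_lam32: "lam13 \<bullet> lam12 \<bullet> lam32 = lam32 \<bullet> lam12 \<bullet> lam13"
proof -
  have "lam13 \<bullet> lam12 \<bullet> lam32 = (vb_inv sigma13 \<bullet> vb_inv (rho1 \<bullet> rho2 \<bullet> sigma1 \<bullet> rho2 \<bullet> rho1) \<bullet> vb_inv sigma13) \<bullet> rho1"
    by (simp add: lam_eq_rho_sigma1 VB_simps)
  also have "\<dots> = (vb_inv (rho1 \<bullet> rho2 \<bullet> sigma1 \<bullet> rho2 \<bullet> rho1) \<bullet> vb_inv sigma13 \<bullet> vb_inv (rho1 \<bullet> rho2 \<bullet> sigma1 \<bullet> rho2 \<bullet> rho1)) \<bullet> rho1"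
    by (simp only: inv_sigma13_sigma2_braid)
  also have "\<dots> = lam32 \<bullet> lam12 \<bullet> lam13"
    by (simp add: lam_eq_rho_sigma1 VB_simps)
  finally show ?thesis .
qed

lemma lam31_lam32_lam12: "lam31 \<bullet> lam32 \<bullet> lam12 = lam12 \<bullet> lam32 \<bullet> lam31"
proof -
  have braid: "(rho2 \<bullet> vb_inv sigma1 \<bullet> vb_inv rho2) \<bullet> (rho2 \<bullet> vb_inv sigma13 \<bullet> vb_inv rho2) \<bullet> (rho2 \<bullet> vb_inv sigma1 \<bullet> vb_inv rho2)
      = (rho2 \<bullet> vb_inv sigma13 \<bullet> vb_inv rho2) \<bullet> (rho2 \<bullet> vb_inv sigma1 \<bullet> vb_inv rho2) \<bullet> (rho2 \<bullet> vb_inv sigma13 \<bullet> vb_inv rho2)"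
    by (rule VB.braid_relation_conj[OF _ _ _ inv_sigma13_sigma1_braid]) simp_all
  have "lam31 \<bullet> lam32 \<bullet> lam12
      = ((rho2 \<bullet> vb_inv sigma1 \<bullet> vb_inv rho2) \<bullet> (rho2 \<bullet> vb_inv sigma13 \<bullet> vb_inv rho2) \<bullet> (rho2 \<bullet> vb_inv sigma1 \<bullet> vb_inv rho2))
        \<bullet> rho2"
    by (simp add: lam_eq_rho_sigma1 VB_simps)
  also have "\<dots> = ((rho2 \<bullet> vb_inv sigma13 \<bullet> vb_inv rho2) \<bullet> (rho2 \<bullet> vb_inv sigma1 \<bullet> vb_inv rho2) \<bullet> (rho2 \<bullet> vb_inv sigma13 \<bullet> vb_inv rho2))
        \<bullet> rho2"
    by (simp only: braid)
  also have "\<dots> = lam12 \<bullet> lam32 \<bullet> lam31"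
    by (simp add: lam_eq_rho_sigma1 VB_simps)
  finally show ?thesis .
qed

fun swap_gen :: "v1gen \<Rightarrow> v1gen" where
  "swap_gen G12 = G21"
| "swap_gen G21 = G12"

definition swap_word :: "v1gen word \<Rightarrow> v1gen word" where
  "swap_word v = map (apfst swap_gen) v"

lemma swap_gen_swap_gen [simp]: "swap_gen (swap_gen g) = g"
  by (cases g) auto

lemma swap_gen_eq_iff [simp]: "swap_gen g = G12 \<longleftrightarrow> g = G21" "swap_gen g = G21 \<longleftrightarrow> g = G12"
  by (cases g; simp)+

lemma swap_word_Nil [simp]: "swap_word [] = []"
  by (simp add: swap_word_def)

lemma swap_word_Cons [simp]: "swap_word (x # v) = (swap_gen (fst x), snd x) # swap_word v"
  by (simp add: swap_word_def apfst_def map_prod_def split_beta)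

lemma swap_word_append [simp]: "swap_word (v @ w) = swap_word v @ swap_word w"
  by (simp add: swap_word_def)

lemma swap_word_swap_word [simp]: "swap_word (swap_word v) = v"
  by (induction v) auto

lemma swap_word_eq_Nil_iff [simp]: "swap_word v = [] \<longleftrightarrow> v = []"
  by (simp add: swap_word_def)

lemma reduced_swap_word [simp]: "reduced (swap_word v) = reduced v"
proof (induction v rule: reduced.induct)
  case (3 x y w)
  then show ?case
    by (cases "fst x"; cases "fst y") auto
qed auto

lemma hd_swap_word: "v \<noteq> [] \<Longrightarrow> fst (hd (swap_word v)) = swap_gen (fst (hd v))"
  by (cases v) auto

lemma lam_classes:
  "lam12 = vb3_class [(R1, False), (S1, True)]"
  "lam21 = vb3_class [(S1, True), (R1, False)]"
  "lam23 = vb3_class [(R2, False), (S2, True)]"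
  "lam32 = vb3_class [(S2, True), (R2, False)]"
  "lam13 = vb3_class [(R2, False), (R1, False), (S1, True), (R2, False)]"
  "lam31 = vb3_class [(R2, False), (S1, True), (R1, False), (R2, False)]"
  by (simp_all add: lam12_def lam21_def lam23_def lam32_def lam13_def lam31_def
      sigma1_def sigma2_def rho1_def rho2_def)

lemma lam_in_VP3 [simp]:
  "lam12 \<in> VP3" "lam21 \<in> VP3" "lam13 \<in> VP3" "lam31 \<in> VP3" "lam23 \<in> VP3" "lam32 \<in> VP3"
  by (simp_all add: lam_classes vb3_class_in_VP3_iff word_perm_def transp_def fun_eq_iff)

lemma lam_in_carrier [simp]:
  "lam12 \<in> carrier VB3" "lam21 \<in> carrier VB3" "lam13 \<in> carrier VB3"
  "lam31 \<in> carrier VB3" "lam23 \<in> carrier VB3" "lam32 \<in> carrier VB3"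
  by (simp_all add: lam_classes)

lemma range_v1_val_VP3: "range v1_val \<subseteq> VP3"
proof (rule image_subsetI)
  fix g
  show "v1_val g \<in> VP3"
    by (cases g) simp_all
qed

lemma range_v1_val [simp]: "range v1_val \<subseteq> carrier VB3"
  using range_v1_val_VP3 VP.subset by blast

abbreviation v1_eval :: "v1gen word \<Rightarrow> vbgen word set" where
  "v1_eval \<equiv> word_eval VB3 v1_val"

lemma v1_eval_in_VP3: "v1_eval v \<in> VP3"
  by (rule VB.word_eval_in_subgroup[OF VP3_subgroup range_v1_val_VP3])

lemma v1_eval_snoc: "v1_eval (reduce (v @ [x])) = v1_eval v \<bullet> letter_eval VB3 v1_val x"
  by (simp add: VB.word_eval_reduce VB.word_eval_append word_eval_Cons)

lemma rho1_lam12_rho1: "rho1 \<bullet> lam12 \<bullet> rho1 = lam21"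
  by (simp add: lam_eq_rho_sigma1 VB.m_assoc)

lemma rho1_lam21_rho1: "rho1 \<bullet> lam21 \<bullet> rho1 = lam12"
  by (simp add: lam_eq_rho_sigma1 VB.m_assoc)

lemma rho1_v1_eval_rho1: "rho1 \<bullet> v1_eval v \<bullet> rho1 = v1_eval (swap_word v)"
proof -
  have "(\<lambda>i. rho1 \<bullet> v1_val i \<bullet> vb_inv rho1) = v1_val \<circ> swap_gen"
  proof
    fix i
    show "rho1 \<bullet> v1_val i \<bullet> vb_inv rho1 = (v1_val \<circ> swap_gen) i"
      by (cases i) (simp_all add: rho1_lam12_rho1 rho1_lam21_rho1)
  qed
  then show ?thesis
    using VB.word_eval_conj[OF range_v1_val, of rho1 v]
    by (simp add: word_eval_map_apfst swap_word_def)
qed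

lemma in_basis_set [simp]:
  "L13 \<in> basis_set" "L23 \<in> basis_set"
  "L31 v \<in> basis_set \<longleftrightarrow> reduced v \<and> (v = [] \<or> fst (hd v) = G21)"
  "L32 u \<in> basis_set \<longleftrightarrow> reduced u \<and> (u = [] \<or> fst (hd u) = G12)"
  by (auto simp: basis_set_def)

lemma L31_in_basis_set_swap: "L31 (swap_word v) \<in> basis_set \<longleftrightarrow> L32 v \<in> basis_set"
  by (cases "v = []") (auto simp: hd_swap_word)

lemma L32_in_basis_set_swap: "L32 (swap_word v) \<in> basis_set \<longleftrightarrow> L31 v \<in> basis_set"
  by (cases "v = []") (auto simp: hd_swap_word)

lemma L31_snoc_in_basis_set:
  assumes "L31 v \<in> basis_set" and "v \<noteq> []"
  shows "L31 (reduce (v @ [(G12, e)])) \<in> basis_set"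
proof -
  have "v \<noteq> [inv_letter (G12, e)]"
    using assms by (auto simp: inv_letter_def)
  then show ?thesis
    using assms hd_reduce_snoc[of v "(G12, e)"] by auto
qed

lemma L32_snoc_in_basis_set:
  assumes "L32 u \<in> basis_set"
  shows "L32 (reduce (u @ [(G12, e)])) \<in> basis_set"
proof (cases "u = [] \<or> u = [inv_letter (G12, e)]")
  case False
  then show ?thesis
    using assms hd_reduce_snoc[of u "(G12, e)"] by auto
qed (auto simp: inv_letter_def reduce_def)

lemma basis_elt_in_VP3: "basis_elt i \<in> VP3"
  by (cases i) (simp_all add: conjg_def v1_eval_in_VP3)

lemma range_basis_elt [simp]: "range basis_elt \<subseteq> carrier VB3"
  using basis_elt_in_VP3 VP.subset by blast

lemma basis_elt_in_carrier [simp]: "basis_elt i \<in> carrier VB3"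
  using range_basis_elt by blast

lemma conj_lam12_basis_elt_L3:
  "vb_inv lam12 \<bullet> basis_elt (L31 v) \<bullet> lam12 = basis_elt (L31 (reduce (v @ [(G12, False)])))"
  "vb_inv lam12 \<bullet> basis_elt (L32 v) \<bullet> lam12 = basis_elt (L32 (reduce (v @ [(G12, False)])))"
  "lam12 \<bullet> basis_elt (L31 v) \<bullet> vb_inv lam12 = basis_elt (L31 (reduce (v @ [(G12, True)])))"
  "lam12 \<bullet> basis_elt (L32 v) \<bullet> vb_inv lam12 = basis_elt (L32 (reduce (v @ [(G12, True)])))"
  by (simp_all add: v1_eval_snoc letter_eval_def VB.conjg_conjg[symmetric])
     (simp_all add: conjg_def)

section \<open>An action of VB3 on which the basis acts freely\<close>

text \<open>rho_subst i, sigma_subst i and sigma_inv_subst i are the basis words of the conjugates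
  rho1 b rho1, sigma1 b sigma1^-1 and sigma1^-1 b sigma1 of b = basis_elt i.\<close>

fun rho_subst :: "basis_idx \<Rightarrow> basis_idx word" where
  "rho_subst L13 = [(L23, False)]"
| "rho_subst L23 = [(L13, False)]"
| "rho_subst (L31 v) = [(L32 (swap_word v), False)]"
| "rho_subst (L32 u) = [(L31 (swap_word u), False)]"

fun sigma_subst :: "basis_idx \<Rightarrow> basis_idx word" where
  "sigma_subst L13 = [(L13, False), (L23, False), (L32 [], False), (L13, True), (L32 [(G12, False)], True)]"
| "sigma_subst L23 = [(L32 [(G12, False)], False), (L13, False), (L32 [], True)]"
| "sigma_subst (L31 v) = [(L32 (reduce (swap_word v @ [(G12, False)])), False)]"
| "sigma_subst (L32 u) =
    (if u = [] then [(L32 [], False), (L31 [], False), (L32 [(G12, False)], True)]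
     else [(L31 (reduce (swap_word u @ [(G12, False)])), False)])"

fun sigma_inv_subst :: "basis_idx \<Rightarrow> basis_idx word" where
  "sigma_inv_subst L13 = [(L31 [], True), (L23, False), (L31 [(G21, True)], False)]"
| "sigma_inv_subst L23 =
    [(L31 [(G21, True)], True), (L23, True), (L31 [], False), (L13, False), (L23, False)]"
| "sigma_inv_subst (L31 v) =
    (if v = [] then [(L31 [(G21, True)], True), (L32 [], False), (L31 [], False)]
     else [(L32 (swap_word (reduce (v @ [(G12, True)]))), False)])"
| "sigma_inv_subst (L32 u) = [(L31 (swap_word (reduce (u @ [(G12, True)]))), False)]"

lemma letters_rho_subst:
  assumes "i \<in> basis_set"
  shows "fst ` set (rho_subst i) \<subseteq> basis_set"
proof (cases i)
  case (L31 v)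
  then have "L32 (swap_word v) \<in> basis_set"
    using assms L32_in_basis_set_swap by blast
  with L31 show ?thesis
    by simp
next
  case (L32 u)
  then have "L31 (swap_word u) \<in> basis_set"
    using assms L31_in_basis_set_swap by blast
  with L32 show ?thesis
    by simp
qed simp_all

lemma letters_sigma_subst:
  assumes "i \<in> basis_set"
  shows "fst ` set (sigma_subst i) \<subseteq> basis_set"
proof (cases i)
  case (L31 v)
  then have "L32 (reduce (swap_word v @ [(G12, False)])) \<in> basis_set"
    using assms L32_in_basis_set_swap L32_snoc_in_basis_set by blast
  with L31 show ?thesis
    by simp
next
  case (L32 u)
  show ?thesis
  proof (cases "u = []")
    case False
    moreover have "L31 (swap_word u) \<in> basis_set"
      using assms L32 L31_in_basis_set_swap by blast
    ultimately have "L31 (reduce (swap_word u @ [(G12, False)])) \<in> basis_set"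
      using L31_snoc_in_basis_set by simp
    with L32 False show ?thesis
      by simp
  qed (simp add: L32)
qed simp_all

lemma letters_sigma_inv_subst:
  assumes "i \<in> basis_set"
  shows "fst ` set (sigma_inv_subst i) \<subseteq> basis_set"
proof (cases i)
  case (L31 v)
  show ?thesis
  proof (cases "v = []")
    case False
    then have "L32 (swap_word (reduce (v @ [(G12, True)]))) \<in> basis_set"
      unfolding L32_in_basis_set_swap using L31_snoc_in_basis_set assms L31 by blast
    with L31 False show ?thesis
      by simp
  qed (simp add: L31)
next
  case (L32 u)
  then have "L31 (swap_word (reduce (u @ [(G12, True)]))) \<in> basis_set"
    unfolding L31_in_basis_set_swap using L32_snoc_in_basis_set assms by blast
  with L32 show ?thesis
    by simp
qed simp_all

lemma reduce_snoc_G12_ne_Nil: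
  assumes "L31 v \<in> basis_set" and "v \<noteq> []"
  shows "reduce (v @ [(G12, e)]) \<noteq> []"
  using L31_snoc_in_basis_set[OF assms] assms reduce_snoc_eq_Nil_iff[of v "(G12, e)"]
  by (auto simp: inv_letter_def)

lemma rho_subst_rho_subst: "i \<in> basis_set \<Longrightarrow> reduce (subst_word rho_subst (rho_subst i)) = [(i, False)]"
  by (cases i) auto

lemma sigma_subst_sigma_inv_subst:
  assumes "i \<in> basis_set"
  shows "reduce (subst_word sigma_subst (sigma_inv_subst i)) = [(i, False)]"
proof (cases i)
  case (L31 v)
  show ?thesis
  proof (cases "v = []")
    case False
    have "reduce (reduce (v @ [(G12, True)]) @ [(G12, False)]) = v"
      using assms L31 by (simp add: reduce_snoc_cancel)
    then show ?thesis
      using L31 False reduce_snoc_G12_ne_Nil[of v True] assms by simp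
  qed (simp add: L31 reduce_def)
next
  case (L32 u)
  have "reduce (reduce (u @ [(G12, True)]) @ [(G12, False)]) = u"
    using assms L32 by (simp add: reduce_snoc_cancel)
  with L32 show ?thesis
    by simp
qed (simp_all add: reduce_def)

lemma sigma_inv_subst_sigma_subst:
  assumes "i \<in> basis_set"
  shows "reduce (subst_word sigma_inv_subst (sigma_subst i)) = [(i, False)]"
proof (cases i)
  case (L31 v)
  have "reduce (reduce (swap_word v @ [(G12, False)]) @ [(G12, True)]) = swap_word v"
    using assms L31 by (simp add: reduce_snoc_cancel)
  with L31 show ?thesis
    by simp
next
  case (L32 u)
  show ?thesis
  proof (cases "u = []")
    case False
    have "L31 (swap_word u) \<in> basis_set"
      using assms L32 L31_in_basis_set_swap by blast
    then have "reduce (swap_word u @ [(G12, False)]) \<noteq> []"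
      using False reduce_snoc_G12_ne_Nil by simp
    moreover have "reduce (reduce (swap_word u @ [(G12, False)]) @ [(G12, True)]) = swap_word u"
      using assms L32 by (simp add: reduce_snoc_cancel)
    ultimately show ?thesis
      using L32 False by simp
  qed (simp add: L32 reduce_def)
qed (simp_all add: reduce_def)

definition basis_word :: "basis_idx word \<Rightarrow> bool" where
  "basis_word f \<longleftrightarrow> reduced f \<and> fst ` set f \<subseteq> basis_set"

lemma basis_word_reduced: "basis_word f \<Longrightarrow> reduced f"
  by (simp add: basis_word_def)

lemma basis_word_Nil [simp]: "basis_word []"
  by (simp add: basis_word_def)

lemma basis_word_cons_red [simp]: "basis_word f \<Longrightarrow> i \<in> basis_set \<Longrightarrow> basis_word (cons_red (i, e) f)"
  by (simp add: basis_word_def letters_cons_red)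

lemma basis_word_free_hom [simp]:
  "basis_word f \<Longrightarrow> basis_word (free_hom rho_subst f)"
  "basis_word f \<Longrightarrow> basis_word (free_hom sigma_subst f)"
  "basis_word f \<Longrightarrow> basis_word (free_hom sigma_inv_subst f)"
  by (simp_all add: basis_word_def letters_free_hom[OF letters_rho_subst]
      letters_free_hom[OF letters_sigma_subst] letters_free_hom[OF letters_sigma_inv_subst])

lemma free_hom_inverse_pairs [simp]:
  "basis_word f \<Longrightarrow> free_hom rho_subst (free_hom rho_subst f) = f"
  "basis_word f \<Longrightarrow> free_hom sigma_subst (free_hom sigma_inv_subst f) = f"
  "basis_word f \<Longrightarrow> free_hom sigma_inv_subst (free_hom sigma_subst f) = f"
  by (simp_all add: basis_word_def free_hom_inverse[OF rho_subst_rho_subst]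
      free_hom_inverse[OF sigma_subst_sigma_inv_subst] free_hom_inverse[OF sigma_inv_subst_sigma_subst])

datatype coset = C1 | C2 | C3

text \<open>The state (f, Ck) models the coset ck f <rho1, sigma1> with c1 = rho1 rho2, c2 = rho2,
  c3 = 1, and gen_act is left multiplication on these cosets.\<close>

fun gen_act :: "vbgen \<times> bool \<Rightarrow> basis_idx word \<times> coset \<Rightarrow> basis_idx word \<times> coset" where
  "gen_act (R1, e) (f, C3) = (free_hom rho_subst f, C3)"
| "gen_act (R1, e) (f, C2) = (f, C1)"
| "gen_act (R1, e) (f, C1) = (f, C2)"
| "gen_act (R2, e) (f, C3) = (f, C2)"
| "gen_act (R2, e) (f, C2) = (f, C3)"
| "gen_act (R2, e) (f, C1) = (free_hom rho_subst f, C1)"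
| "gen_act (S1, False) (f, C3) = (free_hom sigma_subst f, C3)"
| "gen_act (S1, False) (f, C2) = (cons_red (L31 [], True) f, C1)"
| "gen_act (S1, False) (f, C1) = (cons_red (L13, True) f, C2)"
| "gen_act (S1, True) (f, C3) = (free_hom sigma_inv_subst f, C3)"
| "gen_act (S1, True) (f, C1) = (cons_red (L31 [], False) f, C2)"
| "gen_act (S1, True) (f, C2) = (cons_red (L13, False) f, C1)"
| "gen_act (S2, False) (f, C3) = (cons_red (L32 [], True) f, C2)"
| "gen_act (S2, False) (f, C2) = (cons_red (L23, True) f, C3)"
| "gen_act (S2, False) (f, C1) = (free_hom sigma_subst f, C1)"
| "gen_act (S2, True) (f, C2) = (cons_red (L32 [], False) f, C3)"
| "gen_act (S2, True) (f, C3) = (cons_red (L23, False) f, C2)"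
| "gen_act (S2, True) (f, C1) = (free_hom sigma_inv_subst f, C1)"

interpretation cosets: vb3_action gen_act "\<lambda>s. basis_word (fst s)"
proof
  fix s :: "basis_idx word \<times> coset" and x g e
  assume "basis_word (fst s)"
  then show "basis_word (fst (gen_act x s))"
    by (cases s; cases x; rename_tac f k g e; case_tac g; case_tac e; case_tac k) simp_all
  show "gen_act (g, e) (gen_act (g, \<not> e) s) = s"
    using \<open>basis_word (fst s)\<close>
    by (cases s; rename_tac f k; case_tac g; case_tac e; case_tac k) (auto simp: basis_word_def)
next
  fix r and s :: "basis_idx word \<times> coset"
  assume "r \<in> vb3_relators" and "basis_word (fst s)"
  then show "foldr gen_act r s = s"
    by (cases s; rename_tac f k; case_tac k) (auto simp: basis_word_def vb3_relators_def reduce_Cons)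
qed

fun v1_act :: "v1gen \<times> bool \<Rightarrow> basis_idx word \<Rightarrow> basis_idx word" where
  "v1_act (G12, False) f = free_hom rho_subst (free_hom sigma_inv_subst f)"
| "v1_act (G12, True) f = free_hom sigma_subst (free_hom rho_subst f)"
| "v1_act (G21, False) f = free_hom sigma_inv_subst (free_hom rho_subst f)"
| "v1_act (G21, True) f = free_hom rho_subst (free_hom sigma_subst f)"

lemma basis_word_v1_act [simp]: "basis_word f \<Longrightarrow> basis_word (v1_act x f)"
  by (cases x; rename_tac g e; case_tac g; case_tac e) simp_all

lemma basis_word_foldr_v1_act [simp]: "basis_word f \<Longrightarrow> basis_word (foldr v1_act v f)"
  by (induction v) simp_all

lemma class_act_v1_letter:
  "basis_word f \<Longrightarrow> cosets.class_act (letter_eval VB3 v1_val x) (f, C3) = (v1_act x f, C3)"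
  by (cases x; rename_tac g e; case_tac g; case_tac e)
    (simp_all add: letter_eval_def lam_classes cosets.class_act_vb3_class)

lemma class_act_v1_eval:
  "basis_word f \<Longrightarrow> cosets.class_act (v1_eval v) (f, C3) = (foldr v1_act v f, C3)"
proof (induction v arbitrary: f)
  case (Cons x v)
  then show ?case
    by (simp add: word_eval_Cons cosets.class_act_mult class_act_v1_letter)
qed (simp add: cosets.class_act_one)

lemma v1_act_cons_L3:
  assumes "L \<in> {L31, L32}" and "reduced v" and "basis_word f"
  shows "v1_act x (cons_red (L (v @ [x]), False) f) = cons_red (L v, False) (v1_act x f)"
  using assms
  by (cases x; rename_tac g e; case_tac g; case_tac e) (auto simp: reduce_snoc_snoc_cancel basis_word_reduced)

lemma foldr_v1_act_cons_L3:
  assumes "L \<in> {L31, L32}" and "L v \<in> basis_set" and "basis_word f"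
  shows "foldr v1_act v (cons_red (L v, False) f) = cons_red (L [], False) (foldr v1_act v f)"
  using assms(2,3)
proof (induction v arbitrary: f rule: rev_induct)
  case (snoc x w)
  have "reduced w"
    using snoc.prems(1) assms(1) reduced_appendD by auto
  moreover have "L w \<in> basis_set"
    using snoc.prems(1) assms(1) \<open>reduced w\<close> by (cases w) auto
  ultimately show ?case
    using snoc v1_act_cons_L3[OF assms(1)] by simp
qed simp

lemma class_act_basis_elt:
  assumes "i \<in> basis_set" and "basis_word f"
  shows "cosets.class_act (basis_elt i) (f, C3) = (cons_red (i, False) f, C3)"
proof -
  have conj_case: "cosets.class_act (basis_elt (L v)) (f, C3) = (cons_red (L v, False) f, C3)"
    if L: "L \<in> {L31, L32}" and v: "L v \<in> basis_set" for L v
  proof -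
    have base: "cosets.class_act (basis_elt (L [])) (g, C3) = (cons_red (L [], False) g, C3)"
      if "basis_word g" for g
      using L that by (auto simp: lam_classes cosets.class_act_vb3_class)
    have f': "basis_word (cons_red (L v, False) f)"
      using v assms(2) by simp
    have "cosets.class_act (basis_elt (L v)) (f, C3)
        = cosets.class_act (vb_inv (v1_eval v))
            (cosets.class_act (basis_elt (L [])) (cosets.class_act (v1_eval v) (f, C3)))"
      using L assms(2) by (auto simp: conjg_def cosets.class_act_mult cosets.class_act_closed)
    also have "\<dots> = cosets.class_act (vb_inv (v1_eval v)) (cosets.class_act (v1_eval v) (cons_red (L v, False) f, C3))"
      using assms(2) f' by (simp add: class_act_v1_eval base foldr_v1_act_cons_L3[OF L v])
    also have "\<dots> = (cons_red (L v, False) f, C3)"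
      using f' by (simp add: cosets.class_act_inv)
    finally show ?thesis .
  qed
  show ?thesis
    using assms conj_case[of L31] conj_case[of L32]
    by (cases i) (simp_all add: lam_classes cosets.class_act_vb3_class)
qed

lemma class_act_basis_eval:
  assumes "fst ` set w \<subseteq> basis_set" and "basis_word f"
  shows "cosets.class_act (word_eval VB3 basis_elt w) (f, C3) = (append_red w f, C3)"
  using assms(1)
proof (induction w)
  case (Cons x w)
  obtain i e where x: "x = (i, e)"
    by fastforce
  have i: "i \<in> basis_set"
    using Cons.prems x by auto
  have w: "basis_word (append_red w f)"
    using Cons assms(2) by (simp add: basis_word_def letters_append_red)
  have "cosets.class_act (letter_eval VB3 basis_elt x) (append_red w f, C3) = (cons_red x (append_red w f), C3)"
  proof (cases e)
    case True
    have "basis_word (cons_red (i, True) (append_red w f))"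
      using w i by simp
    then have "cosets.class_act (basis_elt i) (cons_red (i, True) (append_red w f), C3) = (append_red w f, C3)"
      using class_act_basis_elt[OF i] w by (simp add: basis_word_reduced)
    then show ?thesis
      using x True i w cosets.class_act_inv[of "basis_elt i" "(cons_red (i, True) (append_red w f), C3)"]
      by (simp add: letter_eval_def)
  qed (simp add: x letter_eval_def class_act_basis_elt[OF i w])
  with Cons assms(2) show ?case
    by (simp add: word_eval_Cons cosets.class_act_mult)
qed (use assms(2) in \<open>simp add: cosets.class_act_one\<close>)

section \<open>Normality of the subgroup generated by the basis\<close>

definition basis_group :: "vbgen word set set" where
  "basis_group = generate VB3 (basis_elt ` basis_set)"

lemma basis_set_image_subset_carrier: "basis_elt ` basis_set \<subseteq> carrier VB3"
  by auto

interpretation BG: subgroup basis_group VB3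
  unfolding basis_group_def by (rule VB.generate_is_subgroup[OF basis_set_image_subset_carrier])

lemmas basis_group_closed [simp] = BG.m_closed BG.m_inv_closed BG.one_closed

lemma basis_elt_in_basis_group: "i \<in> basis_set \<Longrightarrow> basis_elt i \<in> basis_group"
  unfolding basis_group_def by (rule generate.incl) blast

lemma lam_in_basis_group [simp]:
  "lam13 \<in> basis_group" "lam23 \<in> basis_group" "lam31 \<in> basis_group" "lam32 \<in> basis_group"
  "vb_inv lam12 \<bullet> lam32 \<bullet> lam12 \<in> basis_group" "lam12 \<bullet> lam32 \<bullet> vb_inv lam12 \<in> basis_group"
  using basis_elt_in_basis_group[of L13] basis_elt_in_basis_group[of L23]
    basis_elt_in_basis_group[of "L31 []"] basis_elt_in_basis_group[of "L32 []"]
    basis_elt_in_basis_group[of "L32 [(G12, False)]"] basis_elt_in_basis_group[of "L32 [(G12, True)]"]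
  by (simp_all add: conjg_def word_eval_Cons letter_eval_def VB.m_assoc)

lemma lam13_conj_lam12:
  "vb_inv lam12 \<bullet> lam13 \<bullet> lam12 = (vb_inv lam12 \<bullet> lam32 \<bullet> lam12) \<bullet> lam13 \<bullet> vb_inv lam32"
proof -
  have "(vb_inv lam12 \<bullet> lam32 \<bullet> lam12) \<bullet> lam13 \<bullet> vb_inv lam32
      = vb_inv lam12 \<bullet> (lam32 \<bullet> lam12 \<bullet> lam13) \<bullet> vb_inv lam32"
    by (simp add: VB.m_assoc)
  also have "\<dots> = vb_inv lam12 \<bullet> (lam13 \<bullet> lam12 \<bullet> lam32) \<bullet> vb_inv lam32"
    by (simp only: lam13_lam12_lam32)
  finally show ?thesis
    by (simp add: VB.m_assoc)
qed

lemma lam23_conj_lam12: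
  "vb_inv lam12 \<bullet> lam23 \<bullet> lam12 = lam13 \<bullet> lam23 \<bullet> vb_inv (vb_inv lam12 \<bullet> lam13 \<bullet> lam12)"
proof -
  have "lam13 \<bullet> lam23 \<bullet> vb_inv (vb_inv lam12 \<bullet> lam13 \<bullet> lam12)
      = vb_inv lam12 \<bullet> (lam12 \<bullet> lam13 \<bullet> lam23) \<bullet> vb_inv lam12 \<bullet> vb_inv lam13 \<bullet> lam12"
    by (simp add: VB_simps)
  also have "\<dots> = vb_inv lam12 \<bullet> (lam23 \<bullet> lam13 \<bullet> lam12) \<bullet> vb_inv lam12 \<bullet> vb_inv lam13 \<bullet> lam12"
    by (simp only: lam12_lam13_lam23)
  finally show ?thesis
    by (simp add: VB.m_assoc)
qed

lemma lam31_conj_lam12: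
  "vb_inv lam12 \<bullet> lam31 \<bullet> lam12 = lam32 \<bullet> lam31 \<bullet> vb_inv (vb_inv lam12 \<bullet> lam32 \<bullet> lam12)"
proof -
  have "lam32 \<bullet> lam31 \<bullet> vb_inv (vb_inv lam12 \<bullet> lam32 \<bullet> lam12)
      = vb_inv lam12 \<bullet> (lam12 \<bullet> lam32 \<bullet> lam31) \<bullet> vb_inv lam12 \<bullet> vb_inv lam32 \<bullet> lam12"
    by (simp add: VB_simps)
  also have "\<dots> = vb_inv lam12 \<bullet> (lam31 \<bullet> lam32 \<bullet> lam12) \<bullet> vb_inv lam12 \<bullet> vb_inv lam32 \<bullet> lam12"
    by (simp only: lam31_lam32_lam12)
  finally show ?thesis
    by (simp add: VB.m_assoc)
qed

lemma lam13_conj_inv_lam12: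
  "lam12 \<bullet> lam13 \<bullet> vb_inv lam12 = vb_inv lam32 \<bullet> lam13 \<bullet> (lam12 \<bullet> lam32 \<bullet> vb_inv lam12)"
proof -
  have "vb_inv lam32 \<bullet> lam13 \<bullet> (lam12 \<bullet> lam32 \<bullet> vb_inv lam12)
      = vb_inv lam32 \<bullet> (lam13 \<bullet> lam12 \<bullet> lam32) \<bullet> vb_inv lam12"
    by (simp add: VB.m_assoc)
  also have "\<dots> = vb_inv lam32 \<bullet> (lam32 \<bullet> lam12 \<bullet> lam13) \<bullet> vb_inv lam12"
    by (simp only: lam13_lam12_lam32)
  finally show ?thesis
    by (simp add: VB.m_assoc)
qed

lemma lam23_conj_inv_lam12:
  "lam12 \<bullet> lam23 \<bullet> vb_inv lam12 = vb_inv (lam12 \<bullet> lam13 \<bullet> vb_inv lam12) \<bullet> lam23 \<bullet> lam13"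
proof -
  have "vb_inv (lam12 \<bullet> lam13 \<bullet> vb_inv lam12) \<bullet> lam23 \<bullet> lam13
      = lam12 \<bullet> vb_inv lam13 \<bullet> vb_inv lam12 \<bullet> (lam23 \<bullet> lam13 \<bullet> lam12) \<bullet> vb_inv lam12"
    by (simp add: VB_simps)
  also have "\<dots> = lam12 \<bullet> vb_inv lam13 \<bullet> vb_inv lam12 \<bullet> (lam12 \<bullet> lam13 \<bullet> lam23) \<bullet> vb_inv lam12"
    by (simp only: lam12_lam13_lam23)
  finally show ?thesis
    by (simp add: VB.m_assoc)
qed

lemma lam31_conj_inv_lam12:
  "lam12 \<bullet> lam31 \<bullet> vb_inv lam12 = vb_inv (lam12 \<bullet> lam32 \<bullet> vb_inv lam12) \<bullet> lam31 \<bullet> lam32"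
proof -
  have "vb_inv (lam12 \<bullet> lam32 \<bullet> vb_inv lam12) \<bullet> lam31 \<bullet> lam32
      = lam12 \<bullet> vb_inv lam32 \<bullet> vb_inv lam12 \<bullet> (lam31 \<bullet> lam32 \<bullet> lam12) \<bullet> vb_inv lam12"
    by (simp add: VB_simps)
  also have "\<dots> = lam12 \<bullet> vb_inv lam32 \<bullet> vb_inv lam12 \<bullet> (lam12 \<bullet> lam32 \<bullet> lam31) \<bullet> vb_inv lam12"
    by (simp only: lam31_lam32_lam12)
  finally show ?thesis
    by (simp add: VB.m_assoc)
qed

lemma conj_lam12_basis_elt_in_basis_group:
  assumes "i \<in> basis_set"
  shows "vb_inv lam12 \<bullet> basis_elt i \<bullet> lam12 \<in> basis_group"
    and "lam12 \<bullet> basis_elt i \<bullet> vb_inv lam12 \<in> basis_group"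
proof -
  have "vb_inv lam12 \<bullet> basis_elt i \<bullet> lam12 \<in> basis_group \<and> lam12 \<bullet> basis_elt i \<bullet> vb_inv lam12 \<in> basis_group"
  proof (cases i)
    case (L31 v)
    show ?thesis
    proof (cases "v = []")
      case False
      then show ?thesis
        using L31 assms L31_snoc_in_basis_set
        by (simp add: conj_lam12_basis_elt_L3 basis_elt_in_basis_group del: basis_elt.simps)
    qed (simp add: L31 lam31_conj_lam12 lam31_conj_inv_lam12)
  next
    case (L32 u)
    then show ?thesis
      using assms L32_snoc_in_basis_set
      by (simp add: conj_lam12_basis_elt_L3 basis_elt_in_basis_group del: basis_elt.simps)
  qed (simp_all add: lam13_conj_lam12 lam23_conj_lam12 lam13_conj_inv_lam12 lam23_conj_inv_lam12)
  then show "vb_inv lam12 \<bullet> basis_elt i \<bullet> lam12 \<in> basis_group"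
    and "lam12 \<bullet> basis_elt i \<bullet> vb_inv lam12 \<in> basis_group"
    by simp_all
qed

lemma conj_rho1_basis_elt_in_basis_group:
  assumes "i \<in> basis_set"
  shows "rho1 \<bullet> basis_elt i \<bullet> rho1 \<in> basis_group"
proof (cases i)
  case (L31 v)
  have "rho1 \<bullet> basis_elt i \<bullet> rho1 = basis_elt (L32 (swap_word v))"
    using L31 VB.conj_conjg[of lam31 "v1_eval v" rho1]
    by (simp add: rho1_lam31_rho1 rho1_v1_eval_rho1)
  then show ?thesis
    using assms L31 L32_in_basis_set_swap basis_elt_in_basis_group by metis
next
  case (L32 u)
  have "rho1 \<bullet> basis_elt i \<bullet> rho1 = basis_elt (L31 (swap_word u))"
    using L32 VB.conj_conjg[of lam32 "v1_eval u" rho1]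
    by (simp add: rho1_lam32_rho1 rho1_v1_eval_rho1)
  then show ?thesis
    using assms L32 L31_in_basis_set_swap basis_elt_in_basis_group by metis
qed (simp_all add: rho1_lam13_rho1 rho1_lam23_rho1)

lemma rho1_normalizing: "rho1 \<in> normalizing VB3 basis_group"
  unfolding basis_group_def
  by (rule VB.in_normalizing_generate) (auto simp: basis_group_def[symmetric] conj_rho1_basis_elt_in_basis_group)

lemma lam12_normalizing: "lam12 \<in> normalizing VB3 basis_group"
  unfolding basis_group_def
  by (rule VB.in_normalizing_generate) (auto simp: basis_group_def[symmetric] conj_lam12_basis_elt_in_basis_group)

interpretation NB: subgroup "normalizing VB3 basis_group" VB3
  by (rule VB.normalizing_subgroup[OF BG.subset])

lemma sigma1_normalizing: "sigma1 \<in> normalizing VB3 basis_group"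
proof -
  have "vb_inv lam12 \<bullet> rho1 \<in> normalizing VB3 basis_group"
    using lam12_normalizing rho1_normalizing by (intro NB.m_closed NB.m_inv_closed)
  moreover have "vb_inv lam12 \<bullet> rho1 = sigma1"
    by (simp add: lam_eq_rho_sigma1 VB.inv_mult_group VB.m_assoc)
  ultimately show ?thesis
    by simp
qed

lemma basis_group_subset_normalizing: "basis_group \<subseteq> normalizing VB3 basis_group"
  by (rule VB.subgroup_subset_normalizing[OF BG.is_subgroup])

definition coset_rep :: "nat \<Rightarrow> vbgen word set" where
  "coset_rep k = (if k = 3 then vb_one else if k = 2 then rho2 else rho1 \<bullet> rho2)"

lemma coset_rep_in_carrier [simp]: "coset_rep k \<in> carrier VB3"
  by (simp add: coset_rep_def)

text \<open>gen_act (g, False) on (f, Ck) multiplies f by coset_factor g k, or conjugates f by it when it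
  is rho1 or sigma1.\<close>

fun coset_factor :: "vbgen \<Rightarrow> nat \<Rightarrow> vbgen word set" where
  "coset_factor R1 k = (if k = 3 then rho1 else vb_one)"
| "coset_factor R2 k = (if k = 1 then rho1 else vb_one)"
| "coset_factor S1 k = (if k = 3 then sigma1 else if k = 2 then vb_inv lam31 else vb_inv lam13)"
| "coset_factor S2 k = (if k = 3 then vb_inv lam32 else if k = 2 then vb_inv lam23 else sigma1)"

lemma coset_factor_normalizing: "coset_factor g k \<in> normalizing VB3 basis_group"
proof -
  have "vb_inv lam13 \<in> normalizing VB3 basis_group" "vb_inv lam23 \<in> normalizing VB3 basis_group"
    "vb_inv lam31 \<in> normalizing VB3 basis_group" "vb_inv lam32 \<in> normalizing VB3 basis_group"
    using basis_group_subset_normalizing by auto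
  then show ?thesis
    using rho1_normalizing sigma1_normalizing NB.one_closed by (cases g) simp_all
qed

lemma gen_coset_rep:
  assumes "k \<in> {1, 2, 3}"
  shows "vb3_class [(g, False)] \<bullet> coset_rep k = coset_rep (gen_perm g k) \<bullet> coset_factor g k"
proof -
  note defs = coset_rep_def transp_def sigma1_def[symmetric] sigma2_def[symmetric]
    rho1_def[symmetric] rho2_def[symmetric]
  consider "k = 1" | "k = 2" | "k = 3"
    using assms by auto
  then show ?thesis
    by cases (cases g; simp add: defs lam_eq_rho_sigma1 VB_simps sigma2_eq)+
qed

lemma letter_coset_rep:
  assumes "k \<in> {1, 2, 3}"
  shows "\<exists>n\<in>normalizing VB3 basis_group. vb3_class [x] \<bullet> coset_rep k = coset_rep (gen_perm (fst x) k) \<bullet> n"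
proof (cases x)
  case (Pair g e)
  show ?thesis
  proof (cases e)
    case True
    define n where "n = coset_factor g (gen_perm g k)"
    have n: "n \<in> normalizing VB3 basis_group"
      "vb3_class [(g, False)] \<bullet> coset_rep (gen_perm g k) = coset_rep k \<bullet> n"
      unfolding n_def using gen_coset_rep[OF gen_perm_range[OF assms, of g], of g]
      by (simp_all add: coset_factor_normalizing)
    have "vb_inv (vb3_class [(g, False)]) \<bullet> coset_rep k = coset_rep (gen_perm g k) \<bullet> vb_inv n"
      using n NB.subset by (intro VB.inv_mult_eq_mult_inv) auto
    then show ?thesis
      using Pair True n(1) by auto
  qed (use Pair assms gen_coset_rep coset_factor_normalizing in auto)
qed

lemma vb3_class_coset_rep:
  assumes "k \<in> {1, 2, 3}"
  shows "\<exists>n\<in>normalizing VB3 basis_group. vb3_class w \<bullet> coset_rep k = coset_rep (word_perm w k) \<bullet> n"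
proof (induction w)
  case Nil
  then show ?case
    by (intro bexI[of _ vb_one]) (simp_all add: one_VB3[symmetric])
next
  case (Cons x w)
  from Cons obtain n where n: "n \<in> normalizing VB3 basis_group"
    "vb3_class w \<bullet> coset_rep k = coset_rep (word_perm w k) \<bullet> n" ..
  from letter_coset_rep[OF word_perm_range[OF assms], of x w] obtain n'
    where n': "n' \<in> normalizing VB3 basis_group"
      "vb3_class [x] \<bullet> coset_rep (word_perm w k) = coset_rep (gen_perm (fst x) (word_perm w k)) \<bullet> n'" ..
  have n_carrier: "n \<in> carrier VB3" "n' \<in> carrier VB3"
    using n(1) n'(1) NB.subset by blast+
  have "vb3_class (x # w) \<bullet> coset_rep k = vb3_class [x] \<bullet> (vb3_class w \<bullet> coset_rep k)"
    using VB.m_assoc[of "vb3_class [x]" "vb3_class w" "coset_rep k"] by simp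
  also have "\<dots> = coset_rep (word_perm (x # w) k) \<bullet> (n' \<bullet> n)"
    using n_carrier
    by (simp add: n(2) VB.m_assoc[symmetric] n'(2) word_perm_Cons del: vb3_class_mult)
  finally show ?case
    by (rule bexI[OF _ NB.m_closed[OF n'(1) n(1)]])
qed

lemma VP3_subset_normalizing: "VP3 \<subseteq> normalizing VB3 basis_group"
proof
  fix g
  assume "g \<in> VP3"
  then obtain w where w: "g = vb3_class w" "word_perm w = id"
    by (auto simp: VP3_def)
  have "(3::nat) \<in> {1, 2, 3}"
    by simp
  from vb3_class_coset_rep[OF this, of w] obtain n where n: "n \<in> normalizing VB3 basis_group"
    "vb3_class w \<bullet> coset_rep 3 = coset_rep (word_perm w 3) \<bullet> n" ..
  have "n \<in> carrier VB3"
    using n(1) NB.subset by blast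
  with n(2) w have "g = n"
    by (simp add: coset_rep_def)
  with n(1) show "g \<in> normalizing VB3 basis_group"
    by simp
qed

lemma generate_VP3_grp_basis: "generate VP3_grp (basis_elt ` basis_set) = basis_group"
  unfolding VP3_grp_def basis_group_def
  by (rule VB.generate_consistent[OF _ VP3_subgroup]) (auto simp: basis_elt_in_VP3)

lemma basis_group_subset_VP3: "basis_group \<subseteq> VP3"
  unfolding basis_group_def
  by (rule VB.generate_subgroup_incl[OF _ VP3_subgroup]) (auto simp: basis_elt_in_VP3)

lemma basis_group_normal: "basis_group \<lhd> VP3_grp"
  unfolding VP3_grp_def
  by (rule VB.normal_in_subgroup_if_normalizing[OF VP3_subgroup BG.is_subgroup
        basis_group_subset_VP3 VP3_subset_normalizing])

lemma V2star_eq_basis_group: "V2star = basis_group"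
  unfolding V2star_def
proof (rule normal_closure_eqI[OF basis_group_normal])
  interpret P: group VP3_grp
    by (rule group_VP3_grp)
  have "subgroup basis_group VP3_grp"
    using basis_group_normal by (rule normal_imp_subgroup)
  then show "V2 \<subseteq> basis_group"
    unfolding V2_def by (intro P.generate_subgroup_incl) simp_all
next
  fix N
  assume N: "N \<lhd> VP3_grp" "V2 \<subseteq> N"
  interpret P: group VP3_grp
    by (rule group_VP3_grp)
  have lam_N: "lam13 \<in> N" "lam23 \<in> N" "lam31 \<in> N" "lam32 \<in> N"
    using N(2) unfolding V2_def by (auto intro: generate.incl)
  have conj_N: "conjg VB3 l (v1_eval v) \<in> N" if "l \<in> N" for l v
  proof -
    have inv_VP3: "vb_inv (v1_eval v) \<in> VP3"
      by (simp add: v1_eval_in_VP3 VP.m_inv_closed)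
    have "vb_inv (v1_eval v) \<otimes>\<^bsub>VP3_grp\<^esub> l \<otimes>\<^bsub>VP3_grp\<^esub> inv\<^bsub>VP3_grp\<^esub> (vb_inv (v1_eval v)) \<in> N"
      using inv_VP3 that by (intro P.normal_invE(2)[OF N(1)]) simp_all
    then show ?thesis
      using inv_VP3 by (simp add: conjg_def)
  qed
  have "basis_elt i \<in> N" for i
    using lam_N conj_N by (cases i) simp_all
  then have "generate VP3_grp (basis_elt ` basis_set) \<subseteq> N"
    by (intro P.generate_subgroup_incl normal_imp_subgroup[OF N(1)]) blast
  then show "basis_group \<subseteq> N"
    by (simp add: generate_VP3_grp_basis)
qed

lemma free_family_basis: "free_family VP3_grp basis_elt basis_set"
  unfolding free_family_def
proof (intro conjI allI impI)
  show "inj_on basis_elt basis_set"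
  proof (rule inj_onI)
    fix i j
    assume i: "i \<in> basis_set" and j: "j \<in> basis_set" and eq: "basis_elt i = basis_elt j"
    have "([(i, False)], C3) = cosets.class_act (basis_elt i) ([], C3)"
      using class_act_basis_elt[OF i basis_word_Nil] by simp
    also have "\<dots> = cosets.class_act (basis_elt j) ([], C3)"
      by (simp only: eq)
    also have "\<dots> = ([(j, False)], C3)"
      using class_act_basis_elt[OF j basis_word_Nil] by simp
    finally show "i = j"
      by simp
  qed
  show "basis_elt ` basis_set \<subseteq> carrier VP3_grp"
    by (auto simp: basis_elt_in_VP3)
next
  fix w :: "basis_idx word"
  assume w: "w \<noteq> [] \<and> reduced w \<and> set (map fst w) \<subseteq> basis_set"
  have "range basis_elt \<subseteq> VP3"
    using basis_elt_in_VP3 by blast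
  then have "word_eval VP3_grp basis_elt w = word_eval VB3 basis_elt w"
    unfolding VP3_grp_def by (rule VB.word_eval_subgroup_consistent[OF VP3_subgroup])
  moreover have "cosets.class_act (word_eval VB3 basis_elt w) ([], C3) = (w, C3)"
    using class_act_basis_eval[OF _ basis_word_Nil, of w] w
    by (simp add: reduce_def[symmetric] reduce_reduced)
  ultimately have "cosets.class_act (word_eval VP3_grp basis_elt w) ([], C3) = (w, C3)"
    by simp
  moreover have "cosets.class_act vb_one ([], C3) = ([], C3)"
    by (simp add: cosets.class_act_one)
  ultimately show "word_eval VP3_grp basis_elt w \<noteq> \<one>\<^bsub>VP3_grp\<^esub>"
    using w by (metis VP3_grp_simps(3) prod.inject)
qed

theorem lemma3:
  shows "generate VP3_grp (basis_elt ` basis_set) = V2star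
         \<and> free_family VP3_grp basis_elt basis_set"
  by (simp add: generate_VP3_grp_basis V2star_eq_basis_group free_family_basis)

end
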